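(* Let $\mathcal{M}=(E_t,\mathcal{T})$ be a simple oriented matroid, $a\in E_t$, and $k$ an integer with $1\le k\le|\mathcal{T}|/2$. Put $h=\lfloor(|\mathcal{T}|-k+1)/2\rfloor$, $B=\binom{|\mathcal{T}|-k}{h}$, $\mathcal{P}_a=\bigcup_{e\in E_t-\{a\}}\binom{\mathcal{T}^+_e(\mathcal{M})}{h}$, $\mathcal{N}^+=\binom{\mathcal{T}^+_a(\mathcal{M})}{h}-\mathcal{P}_a$, $\mathcal{N}^-=\binom{\mathcal{T}^-_a(\mathcal{M})}{h}-\mathcal{P}_a$. For families $\mathcal{G}$ of tope sets write $U_{\mathcal{G}}=\bigcup_{G\in\mathcal{G}}G$ (with $U_\emptyset=\emptyset$). Define \[ S_1(Q)=\sum_{\substack{\mathcal{G}''\subseteq\mathcal{P}_a:\ 0\le\#\mathcal{G}''\le B-1,\\ |U_{\mathcal{G}''}|\le|\mathcal{T}|-k}}(-1)^{\#\mathcal{G}''}\Biggl(\sum_{\substack{\mathcal{G}'\subseteq\mathcal{N}^-:\ 1\le\#\mathcal{G}'\le B-\#\mathcal{G}'',\\ |U_{\mathcal{G}'}|\le|\mathcal{T}|-k}}(-1)^{\#\mathcal{G}'}Q(\mathcal{G}',\mathcal{G}'')-\sum_{\substack{\mathcal{G}'\subseteq\mathcal{N}^+:\ 1\le\#\mathcal{G}'\le B-\#\mathcal{G}'',\\ |U_{\mathcal{G}'}|\le|\mathcal{T}|-k}}(-1)^{\#\mathcal{G}'}Q(\mathcal{G}',\mathcal{G}'')\Biggr)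 \] and \[ S_2(\mathfrak{Q})=\sum_{\substack{G''\in\boldsymbol{\mathcal{E}}(\mathcal{P}_a):\\ 0\le|G''|\le|\mathcal{T}|-k}}\mu(\hat0,G'')\Biggl(\sum_{\substack{G'\in\boldsymbol{\mathcal{E}}(\mathcal{N}^-):\\ 0<|G'|\le|\mathcal{T}|-k}}\mu(\hat0,G')\,\mathfrak{Q}(G',G'')-\sum_{\substack{G'\in\boldsymbol{\mathcal{E}}(\mathcal{N}^+):\\ 0<|G'|\le|\mathcal{T}|-k}}\mu(\hat0,G')\,\mathfrak{Q}(G',G'')\Biggr), \] where each $\mu$ is the Möbius function of the lattice in which its arguments lie, and $G''=\hat0$ is interpreted as $\emptyset$. (i) With $Q(\mathcal{G}',\mathcal{G}'')=\binom{|\mathcal{T}|-|U_{\mathcal{G}'\cup\mathcal{G}''}|}{k}$ and $\mathfrak{Q}(G',G'')=\binom{|\mathcal{T}|-|G'\cup G''|}{k}$, both $S_1(Q)$ and $S_2(\mathfrak{Q})$ equal $\kappa^{\ast}_k({}_{-a}\mathcal{M})-\kappa^{\ast}_k(\mathcal{M})$. (ii) With $Q(\mathcal{G}',\mathcal{G}'')=\sum_{j=0}^{k}\binom{|U\cup-U|-|U|}{j}\binom{\frac12(|\mathcal{T}|-|U\cup-U|)}{k-j}2^{k-j}$ where $U=U_{\mathcal{G}'\cup\mathcal{G}''}$, and $\mathfrak{Q}(G',G'')$ given by the same expression with $U=G'\cup G''$, both $S_1(Q)$ and $S_2(\mathfrak{Q})$ equal $\mathring{\kappa}^{\ast}_k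({}_{-a}\mathcal{M})-\mathring{\kappa}^{\ast}_k(\mathcal{M})$.
   Context: Let $t\ge 1$ and $E_t=\{1,\dots,t\}$. $\mathcal{M}=(E_t,\mathcal{T})$ is a simple oriented matroid (no loops, parallel or antiparallel elements) with set of topes $\mathcal{T}\subseteq\{+,-\}^{E_t}$, closed under negation. For $e\in E_t$, $\mathcal{T}^+_e(\mathcal{M})=\{T\in\mathcal{T}: T(e)=+\}$ and $\mathcal{T}^-_e(\mathcal{M})=\{T\in\mathcal{T}: T(e)=-\}$. For $G\subseteq\mathcal{T}$, $-G=\{-T:T\in G\}$. $\binom{X}{j}$ denotes the family of $j$-element subsets of $X$; numerical binomial coefficients $\binom{n}{j}$ are $0$ when $j>n$ or $j<0$. For $a\in E_t$, ${}_{-a}\mathcal{M}$ is the reorientation of $\mathcal{M}$ on $\{a\}$: the oriented matroid on $E_t$ whose topes are the sign vectors obtained from the topes of $\mathcal{M}$ by negating the $a$-th component. For a family $\mathcal{G}$ of subsets of $\mathcal{T}$, $\boldsymbol{\mathcal{E}}(\mathcal{G})$ is the lattice of all unions $\bigcup_{F\in\mathcal{F}}F$ over nonempty subfamilies $\mathcal{F}\subseteq\mathcal{G}$, ordered by inclusion, with a new least element $\hat0$ adjoined and interpreted as the empty set ($|\hat0|=0$). A tope committee for an oriented matroid on $E_t$ with tope set $\mathcal{T}'$ is a subset $\mathcal{K}^{\ast}\subset\mathcal{T}'$ with $|\{T\in\mathcal{K}^{\ast}: T(e)=+\}|>\tfrac12|\mathcal{K}^{\ast}|$ for every $e\in E_t$;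 $\kappa^{\ast}_k(\cdot)$ counts tope committees of cardinality $k$, and $\mathring{\kappa}^{\ast}_k(\cdot)$ counts those containing no pair of opposite topes $\{T,-T\}$. *)

theory Defs
  imports Main
begin

datatype sign = Pos | Neg | Zero

fun neg_sign :: "sign \<Rightarrow> sign" where
  "neg_sign Pos = Neg" | "neg_sign Neg = Pos" | "neg_sign Zero = Zero"

type_synonym sv = "nat \<Rightarrow> sign"

text \<open>A sign vector on E_t is represented as a function nat => sign that is Zero outside {1..t}.\<close>
definition sv_on :: "nat \<Rightarrow> sv \<Rightarrow> bool" where
  "sv_on t X \<longleftrightarrow> (\<forall>e. e \<notin> {1..t} \<longrightarrow> X e = Zero)"

definition sv_zero :: sv where "sv_zero = (\<lambda>e. Zero)"

definition sv_neg :: "sv \<Rightarrow> sv" where "sv_neg X = (\<lambda>e. neg_sign (X e))"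

definition sv_comp :: "sv \<Rightarrow> sv \<Rightarrow> sv" where
  "sv_comp X Y = (\<lambda>e. if X e = Zero then Y e else X e)"

definition sv_sep :: "sv \<Rightarrow> sv \<Rightarrow> nat set" where
  "sv_sep X Y = {e. X e \<noteq> Zero \<and> Y e = neg_sign (X e)}"

definition sv_le :: "sv \<Rightarrow> sv \<Rightarrow> bool" where
  "sv_le X Y \<longleftrightarrow> (\<forall>e. X e \<noteq> Zero \<longrightarrow> X e = Y e)"

definition oriented_matroid :: "nat \<Rightarrow> sv set \<Rightarrow> bool" where
  "oriented_matroid t L \<longleftrightarrow>
     (\<forall>X\<in>L. sv_on t X) \<and>
     sv_zero \<in> L \<and>
     (\<forall>X\<in>L. sv_neg X \<in> L) \<and>
     (\<forall>X\<in>L. \<forall>Y\<in>L. sv_comp X Y \<in> L) \<and>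
     (\<forall>X\<in>L. \<forall>Y\<in>L. \<forall>e\<in>sv_sep X Y. \<exists>Z\<in>L. Z e = Zero \<and>
          (\<forall>f. f \<notin> sv_sep X Y \<longrightarrow> Z f = sv_comp X Y f))"

definition topes :: "sv set \<Rightarrow> sv set" where
  "topes L = {T\<in>L. \<forall>Y\<in>L. sv_le T Y \<longrightarrow> Y = T}"

definition simple_om :: "nat \<Rightarrow> sv set \<Rightarrow> bool" where
  "simple_om t L \<longleftrightarrow>
     (\<forall>e\<in>{1..t}. \<exists>X\<in>L. X e \<noteq> Zero) \<and>
     (\<forall>e\<in>{1..t}. \<forall>f\<in>{1..t}. e \<noteq> f \<longrightarrow>
        \<not> (\<forall>X\<in>L. X e = X f) \<and> \<not> (\<forall>X\<in>L. X e = neg_sign (X f)))"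

definition reorient_topes :: "nat \<Rightarrow> sv set \<Rightarrow> sv set" where
  "reorient_topes a TT = (\<lambda>T. T(a := neg_sign (T a))) ` TT"

definition topes_pos :: "sv set \<Rightarrow> nat \<Rightarrow> sv set" where
  "topes_pos TT e = {T\<in>TT. T e = Pos}"

definition topes_neg :: "sv set \<Rightarrow> nat \<Rightarrow> sv set" where
  "topes_neg TT e = {T\<in>TT. T e = Neg}"

definition tope_committee :: "nat \<Rightarrow> sv set \<Rightarrow> sv set \<Rightarrow> bool" where
  "tope_committee t TT K \<longleftrightarrow> K \<subset> TT \<and>
     (\<forall>e\<in>{1..t}. 2 * card {T\<in>K. T e = Pos} > card K)"

definition kappa_star :: "nat \<Rightarrow> nat \<Rightarrow> sv set \<Rightarrow> nat" where
  "kappa_star t k TT = card {K. tope_committee t TT K \<and> card K = k}"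

definition kappa_ring :: "nat \<Rightarrow> nat \<Rightarrow> sv set \<Rightarrow> nat" where
  "kappa_ring t k TT = card {K. tope_committee t TT K \<and> card K = k \<and>
       (\<forall>T\<in>K. sv_neg T \<notin> K)}"

definition subsets_of_card :: "'a set \<Rightarrow> nat \<Rightarrow> 'a set set" where
  "subsets_of_card X j = {Y. Y \<subseteq> X \<and> card Y = j}"

definition h_of :: "nat \<Rightarrow> nat \<Rightarrow> nat" where
  "h_of n k = (n - k + 1) div 2"

definition P_fam :: "nat \<Rightarrow> sv set \<Rightarrow> nat \<Rightarrow> nat \<Rightarrow> sv set set" where
  "P_fam t TT a k = (\<Union>e\<in>{1..t} - {a}. subsets_of_card (topes_pos TT e) (h_of (card TT) k))"

definition Nplus :: "nat \<Rightarrow> sv set \<Rightarrow> nat \<Rightarrow> nat \<Rightarrow> sv set set" where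
  "Nplus t TT a k = subsets_of_card (topes_pos TT a) (h_of (card TT) k) - P_fam t TT a k"

definition Nminus :: "nat \<Rightarrow> sv set \<Rightarrow> nat \<Rightarrow> nat \<Rightarrow> sv set set" where
  "Nminus t TT a k = subsets_of_card (topes_neg TT a) (h_of (card TT) k) - P_fam t TT a k"

definition S1 :: "nat \<Rightarrow> sv set \<Rightarrow> nat \<Rightarrow> nat \<Rightarrow> (sv set set \<Rightarrow> sv set set \<Rightarrow> int) \<Rightarrow> int" where
  "S1 t TT a k Q =
    (let n = card TT; h = h_of n k; B = int (n - k choose h);
         inner = (\<lambda>N G2. \<Sum>G1 \<in> {G1. G1 \<subseteq> N \<and> 1 \<le> card G1 \<and> int (card G1) \<le> B - int (card G2)
                                      \<and> card (\<Union>G1) \<le> n - k}.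
                           (-1::int) ^ card G1 * Q G1 G2)
     in \<Sum>G2 \<in> {G2. G2 \<subseteq> P_fam t TT a k \<and> int (card G2) \<le> B - 1 \<and> card (\<Union>G2) \<le> n - k}.
          (-1::int) ^ card G2 * (inner (Nminus t TT a k) G2 - inner (Nplus t TT a k) G2))"

definition moebius :: "'a set \<Rightarrow> ('a \<Rightarrow> 'a \<Rightarrow> bool) \<Rightarrow> 'a \<Rightarrow> 'a \<Rightarrow> int" where
  "moebius P le = (THE f. \<forall>x y. f x y =
      (if x \<in> P \<and> y \<in> P \<and> le x y then
         (if x = y then 1 else - (\<Sum>z\<in>{z\<in>P. le x z \<and> le z y \<and> z \<noteq> y}. f x z))
       else 0))"

text \<open>None represents the adjoined least element 0-hat (interpreted as the empty set);
  Some X represents the union X of a nonempty subfamily.\<close>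
definition lat_E :: "'a set set \<Rightarrow> 'a set option set" where
  "lat_E G = insert None {Some (\<Union>F) | F. F \<subseteq> G \<and> F \<noteq> {}}"

fun lat_le :: "'a set option \<Rightarrow> 'a set option \<Rightarrow> bool" where
  "lat_le None _ = True"
| "lat_le (Some X) None = False"
| "lat_le (Some X) (Some Y) = (X \<subseteq> Y)"

fun lat_val :: "'a set option \<Rightarrow> 'a set" where
  "lat_val None = {}"
| "lat_val (Some X) = X"

definition S2 :: "nat \<Rightarrow> sv set \<Rightarrow> nat \<Rightarrow> nat \<Rightarrow> (sv set \<Rightarrow> sv set \<Rightarrow> int) \<Rightarrow> int" where
  "S2 t TT a k Q =
    (let n = card TT;
         inner = (\<lambda>N G2. \<Sum>G1 \<in> {G1\<in>lat_E N. 0 < card (lat_val G1) \<and> card (lat_val G1) \<le> n - k}.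
                           moebius (lat_E N) lat_le None G1 * Q (lat_val G1) (lat_val G2))
     in \<Sum>G2 \<in> {G2\<in>lat_E (P_fam t TT a k). card (lat_val G2) \<le> n - k}.
          moebius (lat_E (P_fam t TT a k)) lat_le None G2 *
            (inner (Nminus t TT a k) G2 - inner (Nplus t TT a k) G2))"

definition Qkappa :: "sv set \<Rightarrow> nat \<Rightarrow> sv set \<Rightarrow> int" where
  "Qkappa TT k U = int (card TT - card U choose k)"

definition Qring :: "sv set \<Rightarrow> nat \<Rightarrow> sv set \<Rightarrow> int" where
  "Qring TT k U = (let W = U \<union> sv_neg ` U in
     int (\<Sum>j=0..k. (card W - card U choose j) * ((card TT - card W) div 2 choose (k - j)) * 2 ^ (k - j)))"

end

theory Submission
  imports Defs
begin

text \<open>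
  A k-subset K of the topes is a committee iff for every element e it has a strict
  majority among the topes positive on e. Since exactly half of the topes are positive on e, this
  holds iff K meets every h-subset of those topes, h = h_of n k. The sieve principle then writes
  the committee count as an alternating sum, over families F of such h-subsets, of the number
  Q(\<Union>F) of k-subsets avoiding \<Union>F. Reorientation on a only exchanges the h-subsets of the
  topes positive on a (the family N+) for those of the topes negative on a (the family N-), the
  common part P being shared; subtracting the two expansions gives a double alternating sum
  over subfamilies of P and of N- or N+.

  Finally it shows that S1 and S2 are this same double sum:
  S1 merely drops vanishing terms, and S2 regroups it along the lattice of unions; the two
  choices of Q count all, respectively antipodal-free, k-subsets avoiding a set.
\<close>

lemma alternating_sum_Pow:
  assumes "finite Y"
  shows "(\<Sum>F\<in>Pow Y. (-1::int) ^ card F) = (if Y = {} then 1 else 0)"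
proof (cases "Y = {}")
  case False
  then have "card {F. F \<subseteq> Y \<and> {} \<subseteq> F \<and> even (card F)} = card {F. F \<subseteq> Y \<and> {} \<subseteq> F \<and> odd (card F)}"
    using assms by (intro card_subsupersets_even_odd) auto
  then show ?thesis
    using assms False by (simp add: Pow_def sum_alternating_cancels)
qed simp

lemma sieve_count:
  assumes "finite A" "finite KS"
  shows "int (card {K\<in>KS. \<forall>X\<in>A. \<not> R X K})
     = (\<Sum>F\<in>Pow A. (-1::int) ^ card F * int (card {K\<in>KS. \<forall>X\<in>F. R X K}))"
proof -
  have count: "int (card {K\<in>KS. C K}) = (\<Sum>K\<in>KS. if C K then 1 else 0)" for C
    using assms(2) by (simp add: sum.If_cases Int_def)
  have "(\<Sum>F\<in>Pow A. (-1::int) ^ card F * int (card {K\<in>KS. \<forall>X\<in>F. R X K}))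
      = (\<Sum>K\<in>KS. \<Sum>F\<in>Pow A. if \<forall>X\<in>F. R X K then (-1::int) ^ card F else 0)"
    unfolding count sum_distrib_left by (subst sum.swap) (simp add: if_distrib cong: if_cong)
  also have "\<dots> = (\<Sum>K\<in>KS. \<Sum>F\<in>Pow {X\<in>A. R X K}. (-1::int) ^ card F)"
    by (intro sum.cong refl sum.mono_neutral_cong_right) (use assms(1) in auto)
  also have "\<dots> = (\<Sum>K\<in>KS. if \<forall>X\<in>A. \<not> R X K then 1 else 0)"
    using assms(1) by (intro sum.cong refl) (simp add: alternating_sum_Pow)
  finally show ?thesis
    unfolding count by simp
qed

lemma sum_Pow_disjoint_Un:
  assumes "finite P" "finite N" "P \<inter> N = {}"
  shows "(\<Sum>F\<in>Pow (P \<union> N). f F) = (\<Sum>G2\<in>Pow P. \<Sum>G1\<in>Pow N. f (G1 \<union> G2))"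
proof -
  have bij: "bij_betw (\<lambda>(G2, G1). G1 \<union> G2) (Pow P \<times> Pow N) (Pow (P \<union> N))"
  proof (rule bij_betw_byWitness[where f' = "\<lambda>F. (F \<inter> P, F \<inter> N)"])
    show "(\<lambda>F. (F \<inter> P, F \<inter> N)) ` Pow (P \<union> N) \<subseteq> Pow P \<times> Pow N" by auto
  qed (use assms(3) in auto)
  show ?thesis
    using sum.reindex_bij_betw[OF bij, of f, symmetric]
    by (simp add: sum.cartesian_product split_def)
qed

section \<open>The Moebius function of the lattice of unions\<close>

definition moebius_equations :: "'a set \<Rightarrow> ('a \<Rightarrow> 'a \<Rightarrow> bool) \<Rightarrow> ('a \<Rightarrow> 'a \<Rightarrow> int) \<Rightarrow> bool" where
  "moebius_equations P le f \<longleftrightarrow> (\<forall>x y. f x y =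
      (if x \<in> P \<and> y \<in> P \<and> le x y then
         (if x = y then 1 else - (\<Sum>z\<in>{z\<in>P. le x z \<and> le z y \<and> z \<noteq> y}. f x z))
       else 0))"

lemma moebius_equations_unique:
  fixes r :: "'a \<Rightarrow> nat"
  assumes rank: "\<And>z y. z \<in> P \<Longrightarrow> y \<in> P \<Longrightarrow> le z y \<Longrightarrow> z \<noteq> y \<Longrightarrow> r z < r y"
    and f: "moebius_equations P le f" and g: "moebius_equations P le g"
  shows "f = g"
proof (intro ext)
  fix x y
  show "f x y = g x y"
  proof (induction "r y" arbitrary: y rule: less_induct)
    case less
    have "(\<Sum>z\<in>{z\<in>P. le x z \<and> le z y \<and> z \<noteq> y}. f x z) = (\<Sum>z\<in>{z\<in>P. le x z \<and> le z y \<and> z \<noteq> y}. g x z)"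
      if "y \<in> P" using less rank that by (intro sum.cong) auto
    moreover have "f x y = (if x \<in> P \<and> y \<in> P \<and> le x y then
         (if x = y then 1 else - (\<Sum>z\<in>{z\<in>P. le x z \<and> le z y \<and> z \<noteq> y}. f x z)) else 0)"
      "g x y = (if x \<in> P \<and> y \<in> P \<and> le x y then
         (if x = y then 1 else - (\<Sum>z\<in>{z\<in>P. le x z \<and> le z y \<and> z \<noteq> y}. g x z)) else 0)"
      using f g unfolding moebius_equations_def by blast+
    ultimately show ?case
      by simp
  qed
qed

lemma moebius_equations_exist:
  fixes r :: "'a \<Rightarrow> nat"
  assumes rank: "\<And>z y. z \<in> P \<Longrightarrow> y \<in> P \<Longrightarrow> le z y \<Longrightarrow> z \<noteq> y \<Longrightarrow> r z < r y"
  shows "\<exists>f. moebius_equations P le f"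
proof -
  define R where "R = {(z, y). z \<in> P \<and> y \<in> P \<and> le z y \<and> z \<noteq> y}"
  have wfR: "wf R"
    by (rule wf_subset[OF wf_measure[of r]]) (auto simp: R_def rank)
  define H where "H = (\<lambda>x (g :: 'a \<Rightarrow> int) y. if x \<in> P \<and> y \<in> P \<and> le x y then
         (if x = y then 1 else - (\<Sum>z\<in>{z\<in>P. le x z \<and> le z y \<and> z \<noteq> y}. g z)) else 0)"
  define sol where "sol = (\<lambda>x. wfrec R (H x))"
  have "sol x y = H x (sol x) y" for x y
  proof -
    have "sol x y = H x (cut (sol x) R y) y"
      unfolding sol_def by (rule wfrec[OF wfR])
    also have "\<dots> = H x (sol x) y"
    proof -
      have "(\<Sum>z\<in>{z\<in>P. le x z \<and> le z y \<and> z \<noteq> y}. cut (sol x) R y z)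
          = (\<Sum>z\<in>{z\<in>P. le x z \<and> le z y \<and> z \<noteq> y}. sol x z)" if "y \<in> P"
        using that by (intro sum.cong refl) (simp add: cut_apply R_def)
      then show ?thesis
        unfolding H_def by simp
    qed
    finally show ?thesis .
  qed
  then have "moebius_equations P le sol"
    unfolding moebius_equations_def H_def by blast
  then show ?thesis by blast
qed

lemma moebius_unfold:
  fixes r :: "'a \<Rightarrow> nat"
  assumes rank: "\<And>z y. z \<in> P \<Longrightarrow> y \<in> P \<Longrightarrow> le z y \<Longrightarrow> z \<noteq> y \<Longrightarrow> r z < r y"
  shows "moebius_equations P le (moebius P le)"
proof -
  obtain f0 where f0: "moebius_equations P le f0"
    using moebius_equations_exist[of P le r, OF rank] by blast
  have "\<exists>!f. moebius_equations P le f"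
    using f0 moebius_equations_unique[of P le r, OF rank _ f0] by (rule ex1I)
  then have "moebius_equations P le (THE f. moebius_equations P le f)"
    by (rule theI')
  moreover have "moebius P le = (THE f. moebius_equations P le f)"
    unfolding moebius_def moebius_equations_def by (rule refl)
  ultimately show ?thesis
    by simp
qed

definition lat_of :: "'a set set \<Rightarrow> 'a set option" where
  "lat_of F = (if F = {} then None else Some (\<Union>F))"

fun lat_rank :: "'a set option \<Rightarrow> nat" where
  "lat_rank None = 0"
| "lat_rank (Some X) = Suc (card X)"

lemma lat_of_in_lat_E: "F \<subseteq> N \<Longrightarrow> lat_of F \<in> lat_E N"
  unfolding lat_of_def lat_E_def by auto

lemma lat_val_lat_of [simp]: "lat_val (lat_of F) = \<Union>F"
  unfolding lat_of_def by auto

lemma lat_val_subset: "y \<in> lat_E N \<Longrightarrow> lat_val y \<subseteq> \<Union>N"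
proof -
  assume "y \<in> lat_E N"
  then consider "y = None" | F where "F \<subseteq> N" "y = Some (\<Union>F)"
    unfolding lat_E_def by blast
  then show ?thesis
    by cases auto
qed

lemma lat_le_refl [simp]: "lat_le y y"
  by (cases y) auto

lemma lat_E_finite: "finite (\<Union>N) \<Longrightarrow> finite (lat_E N)"
proof -
  assume "finite (\<Union>N)"
  then have "finite N"
    by (rule finite_UnionD)
  moreover have "lat_E N = insert None ((\<lambda>F. Some (\<Union>F)) ` {F. F \<subseteq> N \<and> F \<noteq> {}})"
    unfolding lat_E_def by auto
  ultimately show ?thesis by simp
qed

lemma lat_rank_strict_mono:
  assumes "finite (\<Union>N)" "z \<in> lat_E N" "y \<in> lat_E N" "lat_le z y" "z \<noteq> y"
  shows "lat_rank z < lat_rank y"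
proof (cases z)
  case (Some Z)
  then obtain Y where Y: "y = Some Y"
    using assms by (cases y) auto
  have "finite Y"
    using lat_val_subset[OF assms(3)] assms(1) Y by (auto intro: finite_subset)
  moreover have "Z \<subset> Y"
    using assms Some Y by auto
  ultimately show ?thesis
    using Some Y by (simp add: psubset_card_mono)
qed (use assms in \<open>cases y; auto\<close>)

text \<open>Grouping the subfamilies whose union lies below a nonbottom element gives the
  alternating sum over all subsets of a nonempty family, which vanishes.\<close>

lemma alternating_sum_below:
  assumes fin: "finite (\<Union>N)" and y: "y \<in> lat_E N" "y \<noteq> None"
  shows "(\<Sum>z\<in>{z\<in>lat_E N. lat_le z y}. \<Sum>F\<in>{F\<in>Pow N. lat_of F = z}. (-1::int) ^ card F) = 0"
proof -
  obtain Y F0 where Y: "y = Some Y" "Y = \<Union>F0" "F0 \<subseteq> N" "F0 \<noteq> {}"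
    using y unfolding lat_E_def by auto
  have finN: "finite N"
    using fin by (rule finite_UnionD)
  have "(\<Sum>z\<in>{z\<in>lat_E N. lat_le z y}. \<Sum>F\<in>{F\<in>Pow N. lat_of F = z}. (-1::int) ^ card F)
      = (\<Sum>F\<in>{F\<in>Pow N. lat_le (lat_of F) y}. (-1::int) ^ card F)"
  proof -
    have "{F\<in>Pow N. lat_of F = z} = {F\<in>{F\<in>Pow N. lat_le (lat_of F) y}. lat_of F = z}"
      if "lat_le z y" for z
      using that by auto
    then show ?thesis
      by (subst sum.group[symmetric, where g = lat_of])
        (use finN lat_E_finite[OF fin] lat_of_in_lat_E in \<open>auto intro!: sum.cong\<close>)
  qed
  also have "{F\<in>Pow N. lat_le (lat_of F) y} = Pow {X\<in>N. X \<subseteq> Y}"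
    using Y by (auto simp: lat_of_def)
  also have "(\<Sum>F\<in>Pow {X\<in>N. X \<subseteq> Y}. (-1::int) ^ card F) = 0"
    using Y finN by (subst alternating_sum_Pow) auto
  finally show ?thesis .
qed

lemma moebius_lat_E:
  assumes fin: "finite (\<Union>N)"
  shows "y \<in> lat_E N \<Longrightarrow> moebius (lat_E N) lat_le None y = (\<Sum>F\<in>{F\<in>Pow N. lat_of F = y}. (-1::int) ^ card F)"
proof (induction "lat_rank y" arbitrary: y rule: less_induct)
  case less
  let ?c = "\<lambda>z. \<Sum>F\<in>{F\<in>Pow N. lat_of F = z}. (-1::int) ^ card F"
  have eqs: "moebius_equations (lat_E N) lat_le (moebius (lat_E N) lat_le)"
    by (rule moebius_unfold[of "lat_E N" lat_le lat_rank, OF lat_rank_strict_mono[OF fin]])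
  have bot: "None \<in> lat_E N"
    unfolding lat_E_def by simp
  show ?case
  proof (cases y)
    case None
    have "{F\<in>Pow N. lat_of F = None} = {{}}"
      by (auto simp: lat_of_def)
    then show ?thesis
      using eqs bot None unfolding moebius_equations_def by simp
  next
    case (Some Y)
    let ?below = "{z\<in>lat_E N. lat_le None z \<and> lat_le z y \<and> z \<noteq> y}"
    have "moebius (lat_E N) lat_le None y = - (\<Sum>z\<in>?below. moebius (lat_E N) lat_le None z)"
      using eqs bot less.prems Some unfolding moebius_equations_def by simp
    also have "\<dots> = - (\<Sum>z\<in>?below. ?c z)"
      using less.hyps lat_rank_strict_mono[OF fin _ less.prems] by (intro arg_cong[where f = uminus] sum.cong) auto
    also have "\<dots> = ?c y"
    proof -
      have "{z\<in>lat_E N. lat_le z y} = insert y ?below" "y \<notin> ?below"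
        using less.prems by auto
      then show ?thesis
        using alternating_sum_below[OF fin less.prems] lat_E_finite[OF fin] Some by simp
    qed
    finally show ?thesis .
  qed
qed

lemma moebius_lat_E_sum:
  assumes fin: "finite (\<Union>N)" and Y: "Y \<subseteq> lat_E N"
  shows "(\<Sum>y\<in>Y. moebius (lat_E N) lat_le None y * \<phi> y)
       = (\<Sum>F\<in>{F\<in>Pow N. lat_of F \<in> Y}. (-1::int) ^ card F * \<phi> (lat_of F))"
proof -
  have finN: "finite N"
    using fin by (rule finite_UnionD)
  have "(\<Sum>y\<in>Y. moebius (lat_E N) lat_le None y * \<phi> y)
      = (\<Sum>y\<in>Y. \<Sum>F\<in>{F\<in>{F\<in>Pow N. lat_of F \<in> Y}. lat_of F = y}. (-1::int) ^ card F * \<phi> (lat_of F))"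
  proof (rule sum.cong[OF refl])
    fix y assume y: "y \<in> Y"
    have "{F\<in>Pow N. lat_of F = y} = {F\<in>{F\<in>Pow N. lat_of F \<in> Y}. lat_of F = y}"
      using y by auto
    then show "moebius (lat_E N) lat_le None y * \<phi> y
        = (\<Sum>F\<in>{F\<in>{F\<in>Pow N. lat_of F \<in> Y}. lat_of F = y}. (-1::int) ^ card F * \<phi> (lat_of F))"
      using moebius_lat_E[OF fin] y Y by (auto simp: sum_distrib_right)
  qed
  also have "\<dots> = (\<Sum>F\<in>{F\<in>Pow N. lat_of F \<in> Y}. (-1::int) ^ card F * \<phi> (lat_of F))"
    by (rule sum.group) (use finN lat_E_finite[OF fin] Y finite_subset in auto)
  finally show ?thesis .
qed

lemma moebius_sum_bounded_unions:
  assumes fin: "finite (\<Union>N)"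
  shows "(\<Sum>y\<in>{y\<in>lat_E N. card (lat_val y) \<le> m}. moebius (lat_E N) lat_le None y * g (lat_val y))
       = (\<Sum>F\<in>{F\<in>Pow N. card (\<Union>F) \<le> m}. (-1::int) ^ card F * g (\<Union>F))"
proof -
  have "{F\<in>Pow N. lat_of F \<in> {y\<in>lat_E N. card (lat_val y) \<le> m}} = {F\<in>Pow N. card (\<Union>F) \<le> m}"
    using lat_of_in_lat_E[of _ N] by auto
  then show ?thesis
    using moebius_lat_E_sum[OF fin, of "{y\<in>lat_E N. card (lat_val y) \<le> m}" "\<lambda>y. g (lat_val y)"] by simp
qed

section \<open>Counting antipodal-free subsets\<close>

definition free_involution_on :: "'a set \<Rightarrow> ('a \<Rightarrow> 'a) \<Rightarrow> bool" where
  "free_involution_on T \<nu> \<longleftrightarrow> (\<forall>y\<in>T. \<nu> y \<in> T \<and> \<nu> (\<nu> y) = y \<and> \<nu> y \<noteq> y)"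

definition antipodal_free :: "('a \<Rightarrow> 'a) \<Rightarrow> 'a set \<Rightarrow> bool" where
  "antipodal_free \<nu> K \<longleftrightarrow> (\<forall>x\<in>K. \<nu> x \<notin> K)"

definition af_count :: "('a \<Rightarrow> 'a) \<Rightarrow> 'a set \<Rightarrow> nat \<Rightarrow> nat" where
  "af_count \<nu> X m = card {K. K \<subseteq> X \<and> card K = m \<and> antipodal_free \<nu> K}"

definition unpaired :: "('a \<Rightarrow> 'a) \<Rightarrow> 'a set \<Rightarrow> 'a set" where
  "unpaired \<nu> X = {y\<in>X. \<nu> y \<notin> X}"

definition paired :: "('a \<Rightarrow> 'a) \<Rightarrow> 'a set \<Rightarrow> 'a set" where
  "paired \<nu> X = {y\<in>X. \<nu> y \<in> X}"

text \<open>The closed form of af_count: choose j unpaired elements and m - j opposite pairs,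
  taking one of the two elements of each pair.\<close>

definition pair_choices :: "nat \<Rightarrow> nat \<Rightarrow> nat \<Rightarrow> nat" where
  "pair_choices s p m = (\<Sum>j=0..m. (s choose j) * (p choose (m - j)) * 2 ^ (m - j))"

lemma pair_choices_0 [simp]: "pair_choices s p 0 = 1"
  by (simp add: pair_choices_def)

lemma pair_choices_empty: "pair_choices 0 0 (Suc m) = 0"
  unfolding pair_choices_def by (rule sum.neutral) auto

text \<open>Pascal-type recurrences for the closed form, mirroring the removal of an unpaired element \<dots>\<close>

lemma pair_choices_Suc_unpaired:
  "pair_choices (Suc s) p (Suc m) = pair_choices s p (Suc m) + pair_choices s p m"
proof -
  let ?c = "\<lambda>i. (p choose i) * 2 ^ i"
  have split: "pair_choices s' p (Suc m) = ?c (Suc m) + (\<Sum>j=Suc 0..Suc m. (s' choose j) * ?c (Suc m - j))" for s'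
    unfolding pair_choices_def by (subst sum.atLeast_Suc_atMost[OF le0]) (simp add: mult.assoc)
  have "(\<Sum>j=Suc 0..Suc m. (Suc s choose j) * ?c (Suc m - j))
      = (\<Sum>j=Suc 0..Suc m. (s choose j) * ?c (Suc m - j) + (s choose (j - 1)) * ?c (Suc m - j))"
  proof (rule sum.cong[OF refl])
    fix j assume "j \<in> {Suc 0..Suc m}"
    then obtain i where "j = Suc i" by (cases j) auto
    then show "(Suc s choose j) * ?c (Suc m - j) = (s choose j) * ?c (Suc m - j) + (s choose (j - 1)) * ?c (Suc m - j)"
      by (simp add: algebra_simps)
  qed
  moreover have "(\<Sum>j=Suc 0..Suc m. (s choose (j - 1)) * ?c (Suc m - j)) = pair_choices s p m"
    unfolding sum.shift_bounds_cl_Suc_ivl pair_choices_def by (simp add: mult.assoc)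
  ultimately show ?thesis
    unfolding split by (simp add: sum.distrib)
qed

text \<open>\<dots> or of a whole opposite pair.\<close>

lemma pair_choices_Suc_paired:
  "pair_choices s (Suc p) (Suc m) = pair_choices s p (Suc m) + 2 * pair_choices s p m"
proof -
  have "(s choose j) * (Suc p choose (Suc m - j)) * 2 ^ (Suc m - j)
      = (s choose j) * (p choose (Suc m - j)) * 2 ^ (Suc m - j) + 2 * ((s choose j) * (p choose (m - j)) * 2 ^ (m - j))"
    if "j \<le> m" for j
  proof -
    have "Suc m - j = Suc (m - j)" using that by simp
    then show ?thesis by (simp add: algebra_simps)
  qed
  then have "(\<Sum>j=0..m. (s choose j) * (Suc p choose (Suc m - j)) * 2 ^ (Suc m - j))
      = (\<Sum>j=0..m. (s choose j) * (p choose (Suc m - j)) * 2 ^ (Suc m - j)) + 2 * pair_choices s p m"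
    unfolding pair_choices_def sum_distrib_left sum.distrib[symmetric] by (intro sum.cong) auto
  then show ?thesis
    unfolding pair_choices_def[of _ _ "Suc m"] sum.atLeast0_atMost_Suc by simp
qed

lemma antipodal_free_insert:
  assumes "free_involution_on T \<nu>" "insert y K \<subseteq> T" "y \<notin> K"
  shows "antipodal_free \<nu> (insert y K) \<longleftrightarrow> antipodal_free \<nu> K \<and> \<nu> y \<notin> K"
  using assms unfolding free_involution_on_def antipodal_free_def by (metis insert_iff subsetD)

lemma card_subsets_insert:
  assumes "finite Y" "x \<notin> Y"
  shows "card {K. K \<subseteq> insert x Y \<and> card K = Suc m \<and> \<Phi> K}
       = card {K. K \<subseteq> Y \<and> card K = Suc m \<and> \<Phi> K} + card {K. K \<subseteq> Y \<and> card K = m \<and> \<Phi> (insert x K)}"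
proof -
  let ?A = "{K. K \<subseteq> Y \<and> card K = Suc m \<and> \<Phi> K}"
  let ?B = "{K. K \<subseteq> Y \<and> card K = m \<and> \<Phi> (insert x K)}"
  have "{K. K \<subseteq> insert x Y \<and> card K = Suc m \<and> \<Phi> K} = ?A \<union> insert x ` ?B"
  proof (intro set_eqI iffI)
    fix K assume K: "K \<in> {K. K \<subseteq> insert x Y \<and> card K = Suc m \<and> \<Phi> K}"
    show "K \<in> ?A \<union> insert x ` ?B"
    proof (cases "x \<in> K")
      case True
      then have eq: "insert x (K - {x}) = K"
        by auto
      have "finite K"
        using K assms(1) finite_subset by auto
      then have "K - {x} \<in> ?B"
        using K True eq by auto
      then show ?thesis
        using eq by blast
    qed (use K in auto)
  next
    fix K assume "K \<in> ?A \<union> insert x ` ?B"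
    then consider "K \<in> ?A" | K0 where "K0 \<in> ?B" "K = insert x K0"
      by blast
    then show "K \<in> {K. K \<subseteq> insert x Y \<and> card K = Suc m \<and> \<Phi> K}"
    proof cases
      case 2
      then have "finite K0" "x \<notin> K0"
        using assms finite_subset by auto
      then show ?thesis
        using 2 by auto
    qed auto
  qed
  moreover have "finite ?A" "finite ?B"
    using assms(1) by (auto intro: finite_subset[of _ "Pow Y"])
  moreover have "?A \<inter> insert x ` ?B = {}"
    using assms(2) by auto
  moreover have "inj_on (insert x) ?B"
    unfolding inj_on_def using assms(2) by (metis (no_types, lifting) insert_ident mem_Collect_eq subsetD)
  ultimately show ?thesis
    by (simp add: card_Un_disjoint card_image)
qed

lemma af_count_0 [simp]: "finite X \<Longrightarrow> af_count \<nu> X 0 = 1"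
proof -
  assume "finite X"
  then have "{K. K \<subseteq> X \<and> card K = 0 \<and> antipodal_free \<nu> K} = {{}}"
    by (auto simp: card_eq_0_iff rev_finite_subset antipodal_free_def)
  then show ?thesis
    unfolding af_count_def by simp
qed

text \<open>Recurrence for af_count when an unpaired element is removed \<dots>\<close>

lemma af_count_remove_unpaired:
  assumes inv: "free_involution_on T \<nu>"
    and X: "X \<subseteq> T" "finite X" "x \<in> X" "\<nu> x \<notin> X"
  shows "af_count \<nu> X (Suc m) = af_count \<nu> (X - {x}) (Suc m) + af_count \<nu> (X - {x}) m"
proof -
  have "{K. K \<subseteq> X - {x} \<and> card K = m \<and> antipodal_free \<nu> (insert x K)}
      = {K. K \<subseteq> X - {x} \<and> card K = m \<and> antipodal_free \<nu> K}"
    using antipodal_free_insert[OF inv] X by blast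
  moreover have "X = insert x (X - {x})"
    using X by auto
  ultimately show ?thesis
    unfolding af_count_def using card_subsets_insert[of "X - {x}" x m] X by simp
qed

text \<open>\<dots> and when an opposite pair is removed: the new set may contain x, its opposite, or neither.\<close>

lemma af_count_remove_pair:
  assumes inv: "free_involution_on T \<nu>"
    and X: "X \<subseteq> T" "finite X" "x \<in> X" "\<nu> x \<in> X"
  defines "Y \<equiv> X - {x, \<nu> x}"
  shows "af_count \<nu> X (Suc m) = af_count \<nu> Y (Suc m) + 2 * af_count \<nu> Y m"
proof -
  have nx: "\<nu> x \<noteq> x" "\<nu> (\<nu> x) = x"
    using inv X unfolding free_involution_on_def by auto
  have Y: "X = insert x (insert (\<nu> x) Y)" "insert (\<nu> x) Y \<subseteq> T" "finite Y" "x \<notin> insert (\<nu> x) Y" "\<nu> x \<notin> Y"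
    using X nx unfolding Y_def by auto
  have "antipodal_free \<nu> (insert x K) \<longleftrightarrow> antipodal_free \<nu> K \<and> \<nu> x \<notin> K"
    if "K \<subseteq> insert (\<nu> x) Y" for K
    by (rule antipodal_free_insert[OF inv]) (use that Y X in auto)
  then have with_x: "{K. K \<subseteq> insert (\<nu> x) Y \<and> card K = m \<and> antipodal_free \<nu> (insert x K)}
      = {K. K \<subseteq> Y \<and> card K = m \<and> antipodal_free \<nu> K}"
    using Y(5) by (blast dest: subset_insert[THEN iffD1, rotated])
  have "antipodal_free \<nu> (insert (\<nu> x) K) \<longleftrightarrow> antipodal_free \<nu> K" if "K \<subseteq> Y" for K
    using antipodal_free_insert[OF inv, of "\<nu> x" K] that Y nx by auto
  then have with_nx: "{K. K \<subseteq> Y \<and> card K = m \<and> antipodal_free \<nu> (insert (\<nu> x) K)}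
      = {K. K \<subseteq> Y \<and> card K = m \<and> antipodal_free \<nu> K}"
    by blast
  show ?thesis
    unfolding af_count_def Y(1)
    using card_subsets_insert[of "insert (\<nu> x) Y" x m] card_subsets_insert[of Y "\<nu> x" m] Y with_x with_nx
    by simp
qed

lemma unpaired_paired_remove_unpaired:
  assumes inv: "free_involution_on T \<nu>" and X: "X \<subseteq> T" "finite X" "x \<in> X" "\<nu> x \<notin> X"
  shows "paired \<nu> (X - {x}) = paired \<nu> X"
    and "card (unpaired \<nu> X) = Suc (card (unpaired \<nu> (X - {x})))"
proof -
  have invX: "\<nu> (\<nu> y) = y" "\<nu> y \<noteq> y" if "y \<in> X" for y
    using inv X that unfolding free_involution_on_def by auto
  show "paired \<nu> (X - {x}) = paired \<nu> X"
    unfolding paired_def using X invX by auto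
  have "unpaired \<nu> X = insert x (unpaired \<nu> (X - {x}))" "x \<notin> unpaired \<nu> (X - {x})"
    unfolding unpaired_def using X invX by auto
  moreover have "finite (unpaired \<nu> (X - {x}))"
    unfolding unpaired_def using X by simp
  ultimately show "card (unpaired \<nu> X) = Suc (card (unpaired \<nu> (X - {x})))"
    by simp
qed

lemma unpaired_paired_remove_pair:
  assumes inv: "free_involution_on T \<nu>" and X: "X \<subseteq> T" "finite X" "x \<in> X" "\<nu> x \<in> X"
  shows "unpaired \<nu> (X - {x, \<nu> x}) = unpaired \<nu> X"
    and "card (paired \<nu> X) = Suc (Suc (card (paired \<nu> (X - {x, \<nu> x}))))"
proof -
  have invX: "\<nu> (\<nu> y) = y" "\<nu> y \<noteq> y" if "y \<in> X" for y
    using inv X that unfolding free_involution_on_def by auto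
  show "unpaired \<nu> (X - {x, \<nu> x}) = unpaired \<nu> X"
    unfolding unpaired_def using X invX by (auto; metis invX(1))
  have "paired \<nu> X = insert x (insert (\<nu> x) (paired \<nu> (X - {x, \<nu> x})))"
    unfolding paired_def using X invX by (auto; metis invX(1))
  moreover have "finite (paired \<nu> (X - {x, \<nu> x}))" "x \<noteq> \<nu> x"
    unfolding paired_def using X invX(2)[OF X(3)] by auto
  ultimately show "card (paired \<nu> X) = Suc (Suc (card (paired \<nu> (X - {x, \<nu> x}))))"
    by (simp add: paired_def)
qed

lemma af_count_formula:
  assumes inv: "free_involution_on T \<nu>" and fin: "finite T"
  shows "X \<subseteq> T \<Longrightarrow> even (card (paired \<nu> X))
    \<and> (\<forall>m. af_count \<nu> X m = pair_choices (card (unpaired \<nu> X)) (card (paired \<nu> X) div 2) m)"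
proof (induction "card X" arbitrary: X rule: less_induct)
  case less
  have fX: "finite X"
    using less.prems fin finite_subset by auto
  show ?case
  proof (cases "X = {}")
    case True
    have "af_count \<nu> {} m = pair_choices 0 0 m" for m
      by (cases m) (simp_all add: pair_choices_empty, auto simp: af_count_def)
    then show ?thesis
      using True by (simp add: unpaired_def paired_def)
  next
    case False
    then obtain x where x: "x \<in> X" by blast
    show ?thesis
    proof (cases "\<nu> x \<in> X")
      case False
      have IH: "even (card (paired \<nu> (X - {x})))
        \<and> (\<forall>m. af_count \<nu> (X - {x}) m = pair_choices (card (unpaired \<nu> (X - {x}))) (card (paired \<nu> (X - {x})) div 2) m)"
        using less.hyps[OF card_Diff1_less[OF fX x]] less.prems by auto
      note shape = unpaired_paired_remove_unpaired[OF inv less.prems fX x False]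
      have "af_count \<nu> X m = pair_choices (card (unpaired \<nu> X)) (card (paired \<nu> X) div 2) m" for m
        using IH shape af_count_remove_unpaired[OF inv less.prems fX x False] fX
        by (cases m) (simp_all add: pair_choices_Suc_unpaired)
      then show ?thesis
        using IH shape by simp
    next
      case True
      let ?Y = "X - {x, \<nu> x}"
      have IH: "even (card (paired \<nu> ?Y))
        \<and> (\<forall>m. af_count \<nu> ?Y m = pair_choices (card (unpaired \<nu> ?Y)) (card (paired \<nu> ?Y) div 2) m)"
        using less.hyps[of ?Y] less.prems x fX by (auto intro: psubset_card_mono)
      note shape = unpaired_paired_remove_pair[OF inv less.prems fX x True]
      have "af_count \<nu> X m = pair_choices (card (unpaired \<nu> X)) (card (paired \<nu> X) div 2) m" for m
        using IH shape af_count_remove_pair[OF inv less.prems fX x True] fX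
        by (cases m) (simp_all add: pair_choices_Suc_paired)
      then show ?thesis
        using IH shape by simp
    qed
  qed
qed

lemma neg_sign_inv [simp]: "neg_sign (neg_sign s) = s"
  by (cases s) auto

lemma neg_sign_eq_iff [simp]:
  "neg_sign s = Pos \<longleftrightarrow> s = Neg" "neg_sign s = Neg \<longleftrightarrow> s = Pos" "neg_sign s = Zero \<longleftrightarrow> s = Zero"
  by (cases s; simp)+

lemma sv_neg_inv [simp]: "sv_neg (sv_neg X) = X"
  unfolding sv_neg_def by simp

lemma sv_neg_apply [simp]: "sv_neg X e = neg_sign (X e)"
  unfolding sv_neg_def by simp

lemma finite_sv_on: "finite {X. sv_on t X}"
proof -
  have "UNIV = {Pos, Neg, Zero}"
    by (auto intro: sign.exhaust)
  then have "finite (UNIV :: sign set)"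
    by (metis finite.emptyI finite.insertI)
  then show ?thesis
    using finite_set_of_finite_funs[of "{1..t}" "UNIV :: sign set" Zero] unfolding sv_on_def by simp
qed

lemma finite_topes: "oriented_matroid t L \<Longrightarrow> finite (topes L)"
  unfolding oriented_matroid_def topes_def by (rule finite_subset[OF _ finite_sv_on]) auto

lemma tope_nonzero:
  assumes om: "oriented_matroid t L" and s: "simple_om t L" and T: "T \<in> topes L" and e: "e \<in> {1..t}"
  shows "T e \<noteq> Zero"
proof
  assume zero: "T e = Zero"
  obtain X where X: "X \<in> L" "X e \<noteq> Zero"
    using s e unfolding simple_om_def by blast
  have "sv_comp T X \<in> L"
    using om T X(1) unfolding oriented_matroid_def topes_def by blast
  moreover have "sv_le T (sv_comp T X)"
    unfolding sv_le_def sv_comp_def by simp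
  ultimately have "sv_comp T X = T"
    using T unfolding topes_def by blast
  then have "sv_comp T X e = T e"
    by simp
  then show False
    using zero X(2) by (simp add: sv_comp_def)
qed

lemma tope_neg:
  assumes om: "oriented_matroid t L" and T: "T \<in> topes L"
  shows "sv_neg T \<in> topes L"
proof -
  have negL: "sv_neg X \<in> L" if "X \<in> L" for X
    using om that unfolding oriented_matroid_def by blast
  have "Y = sv_neg T" if "Y \<in> L" "sv_le (sv_neg T) Y" for Y
  proof -
    have "sv_le T (sv_neg Y)"
      unfolding sv_le_def
    proof (intro allI impI)
      fix f assume "T f \<noteq> Zero"
      then have "neg_sign (T f) = Y f"
        using that(2) unfolding sv_le_def by simp
      then show "T f = sv_neg Y f"
        by (metis neg_sign_inv sv_neg_apply)
    qed
    then have "sv_neg Y = T"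
      using T negL[OF that(1)] unfolding topes_def by blast
    then show ?thesis by auto
  qed
  then show ?thesis
    using T negL unfolding topes_def by blast
qed

lemma topes_free_involution:
  assumes "1 \<le> t" "oriented_matroid t L" "simple_om t L"
  shows "free_involution_on (topes L) sv_neg"
proof -
  have "sv_neg T \<noteq> T" if "T \<in> topes L" for T
  proof
    assume "sv_neg T = T"
    then have "neg_sign (T 1) = T 1"
      by (metis sv_neg_apply)
    moreover have "T 1 \<noteq> Zero"
      using tope_nonzero assms that by auto
    ultimately show False
      by (cases "T 1") auto
  qed
  then show ?thesis
    unfolding free_involution_on_def using tope_neg[OF assms(2)] by auto
qed

lemma topes_halves:
  assumes om: "oriented_matroid t L" and s: "simple_om t L" and e: "e \<in> {1..t}"
  shows "2 * card (topes_pos (topes L) e) = card (topes L)"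
    and "2 * card (topes_neg (topes L) e) = card (topes L)"
proof -
  let ?P = "topes_pos (topes L) e" and ?N = "topes_neg (topes L) e"
  have "?N = sv_neg ` ?P"
    unfolding topes_pos_def topes_neg_def using tope_neg[OF om]
    by (auto simp: image_iff) (metis sv_neg_inv sv_neg_apply neg_sign_eq_iff(1))
  moreover have "inj sv_neg"
    by (metis injI sv_neg_inv)
  ultimately have "card ?N = card ?P"
    by (simp add: card_image inj_on_subset)
  moreover have "?P \<union> ?N = topes L" "?P \<inter> ?N = {}"
    using tope_nonzero[OF om s _ e] unfolding topes_pos_def topes_neg_def
    by (auto intro: sign.exhaust)
  moreover have "finite (topes L)"
    using finite_topes[OF om] .
  ultimately show "2 * card ?P = card (topes L)" "2 * card ?N = card (topes L)"
    by (metis card_Un_disjoint finite_Un mult_2)+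
qed

text \<open>Number of k-subsets of TT having a strict majority in every one of the sets S e.
  Both kinds of tope committees are counted by this with a suitable side condition \<Phi>.\<close>

definition committee_count :: "nat \<Rightarrow> 'a set \<Rightarrow> (nat \<Rightarrow> 'a set) \<Rightarrow> nat \<Rightarrow> ('a set \<Rightarrow> bool) \<Rightarrow> nat" where
  "committee_count t TT S k \<Phi> =
     card {K. K \<subseteq> TT \<and> card K = k \<and> (\<forall>e\<in>{1..t}. k < 2 * card (K \<inter> S e)) \<and> \<Phi> K}"

lemma tope_committee_iff:
  assumes "k < card TT"
  shows "(tope_committee t TT K \<and> card K = k)
     \<longleftrightarrow> (K \<subseteq> TT \<and> card K = k \<and> (\<forall>e\<in>{1..t}. k < 2 * card {T\<in>K. T e = Pos}))"
  using assms unfolding tope_committee_def by auto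

lemma kappa_as_committee_count:
  assumes "k < card TT"
  shows "kappa_star t k TT = committee_count t TT (topes_pos TT) k (\<lambda>_. True)"
    and "kappa_ring t k TT = committee_count t TT (topes_pos TT) k (antipodal_free sv_neg)"
proof -
  have count: "{T\<in>K. T e = Pos} = K \<inter> topes_pos TT e" if "K \<subseteq> TT" for K e
    using that unfolding topes_pos_def by auto
  have eq: "(tope_committee t TT K \<and> card K = k)
      \<longleftrightarrow> (K \<subseteq> TT \<and> card K = k \<and> (\<forall>e\<in>{1..t}. k < 2 * card (K \<inter> topes_pos TT e)))" for K
  proof -
    have "(\<forall>e\<in>{1..t}. k < 2 * card {T\<in>K. T e = Pos}) \<longleftrightarrow> (\<forall>e\<in>{1..t}. k < 2 * card (K \<inter> topes_pos TT e))"
      if "K \<subseteq> TT" using count[OF that] by simp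
    then show ?thesis
      using tope_committee_iff[OF assms, of t K] by blast
  qed
  show "kappa_star t k TT = committee_count t TT (topes_pos TT) k (\<lambda>_. True)"
    unfolding kappa_star_def committee_count_def using eq by simp
  have "{K. tope_committee t TT K \<and> card K = k \<and> (\<forall>T\<in>K. sv_neg T \<notin> K)}
      = {K. K \<subseteq> TT \<and> card K = k \<and> (\<forall>e\<in>{1..t}. k < 2 * card (K \<inter> topes_pos TT e))
            \<and> antipodal_free sv_neg K}"
    unfolding antipodal_free_def using eq by blast
  then show "kappa_ring t k TT = committee_count t TT (topes_pos TT) k (antipodal_free sv_neg)"
    unfolding kappa_ring_def committee_count_def by simp
qed

definition flip_at :: "nat \<Rightarrow> sv \<Rightarrow> sv" where
  "flip_at a T = T(a := neg_sign (T a))"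

lemma flip_at_flip_at [simp]: "flip_at a (flip_at a T) = T"
  unfolding flip_at_def by auto

lemma inj_flip_at: "inj_on (flip_at a) X"
  by (metis inj_onI flip_at_flip_at)

text \<open>After reorientation on a, the topes positive on e correspond to these topes of the original set.\<close>

definition reoriented_pos :: "sv set \<Rightarrow> nat \<Rightarrow> nat \<Rightarrow> sv set" where
  "reoriented_pos TT a e = (if e = a then topes_neg TT a else topes_pos TT e)"

lemma reoriented_pos_count:
  assumes "K \<subseteq> TT"
  shows "card {T\<in>flip_at a ` K. T e = Pos} = card (K \<inter> reoriented_pos TT a e)"
proof -
  have "flip_at a T e = Pos \<longleftrightarrow> T \<in> reoriented_pos TT a e" if "T \<in> TT" for T
    using that unfolding reoriented_pos_def topes_pos_def topes_neg_def flip_at_def by auto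
  then have "{T\<in>flip_at a ` K. T e = Pos} = flip_at a ` (K \<inter> reoriented_pos TT a e)"
    using assms by auto
  then show ?thesis
    by (simp add: card_image[OF inj_flip_at])
qed

lemma card_Collect_image_involution:
  assumes inv: "\<And>x. f (f x) = x"
  shows "card {K'. R K'} = card {K. R (f ` K)}"
proof -
  have ff: "f ` f ` A = A" for A
    using inv by (simp add: image_comp comp_def)
  have "{K'. R K'} = image f ` {K. R (f ` K)}"
    using ff by (auto simp: image_iff) (metis ff)
  moreover have "inj_on (image f) {K. R (f ` K)}"
    by (metis ff inj_onI)
  ultimately show ?thesis
    by (simp add: card_image)
qed

lemma kappa_reoriented_as_committee_count:
  assumes "k < card TT"
  shows "kappa_star t k (reorient_topes a TT) = committee_count t TT (reoriented_pos TT a) k (\<lambda>_. True)"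
    and "kappa_ring t k (reorient_topes a TT)
       = committee_count t TT (reoriented_pos TT a) k (antipodal_free sv_neg)"
proof -
  have R: "reorient_topes a TT = flip_at a ` TT"
    unfolding reorient_topes_def flip_at_def by simp
  have card_flip: "card (flip_at a ` X) = card X" for X
    by (rule card_image[OF inj_flip_at])
  have eq: "(tope_committee t (flip_at a ` TT) (flip_at a ` K) \<and> card (flip_at a ` K) = k)
      \<longleftrightarrow> (K \<subseteq> TT \<and> card K = k \<and> (\<forall>e\<in>{1..t}. k < 2 * card (K \<inter> reoriented_pos TT a e)))" for K
    using tope_committee_iff[of k "flip_at a ` TT" t "flip_at a ` K"] assms reoriented_pos_count[of K TT a]
    by (simp add: card_flip inj_image_subset_iff[OF inj_flip_at]) (metis (no_types, lifting))
  have antipodal: "antipodal_free sv_neg (flip_at a ` K) \<longleftrightarrow> antipodal_free sv_neg K" for K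
  proof -
    have "sv_neg (flip_at a T) = flip_at a (sv_neg T)" for T
      unfolding flip_at_def sv_neg_def by auto
    then show ?thesis
      unfolding antipodal_free_def by (simp add: inj_image_mem_iff[OF inj_flip_at])
  qed
  show "kappa_star t k (reorient_topes a TT) = committee_count t TT (reoriented_pos TT a) k (\<lambda>_. True)"
    unfolding kappa_star_def committee_count_def R
    by (subst card_Collect_image_involution[of "flip_at a"]) (simp_all add: eq)
  show "kappa_ring t k (reorient_topes a TT)
      = committee_count t TT (reoriented_pos TT a) k (antipodal_free sv_neg)"
    unfolding kappa_ring_def committee_count_def R antipodal_free_def[symmetric]
  proof (subst card_Collect_image_involution[of "flip_at a"])
    have "{K. tope_committee t (flip_at a ` TT) (flip_at a ` K) \<and> card (flip_at a ` K) = k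
            \<and> antipodal_free sv_neg (flip_at a ` K)}
        = {K. K \<subseteq> TT \<and> card K = k \<and> (\<forall>e\<in>{1..t}. k < 2 * card (K \<inter> reoriented_pos TT a e))
            \<and> antipodal_free sv_neg K}"
      using eq antipodal by blast
    then show "card {K. tope_committee t (flip_at a ` TT) (flip_at a ` K) \<and> card (flip_at a ` K) = k
            \<and> antipodal_free sv_neg (flip_at a ` K)}
        = card {K. K \<subseteq> TT \<and> card K = k \<and> (\<forall>e\<in>{1..t}. k < 2 * card (K \<inter> reoriented_pos TT a e))
            \<and> antipodal_free sv_neg K}"
      by simp
  qed simp
qed

section \<open>Majorities as covering conditions: the sieve\<close>

lemma hits_all_iff:
  assumes "finite S"
  shows "(\<forall>X\<in>subsets_of_card S h. X \<inter> K \<noteq> {}) \<longleftrightarrow> card (S - K) < h"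
proof
  assume hits: "\<forall>X\<in>subsets_of_card S h. X \<inter> K \<noteq> {}"
  show "card (S - K) < h"
  proof (rule ccontr)
    assume "\<not> card (S - K) < h"
    then obtain X where "X \<subseteq> S - K" "card X = h"
      by (meson not_less obtain_subset_with_card_n)
    then show False
      using hits unfolding subsets_of_card_def by blast
  qed
next
  assume small: "card (S - K) < h"
  show "\<forall>X\<in>subsets_of_card S h. X \<inter> K \<noteq> {}"
  proof (intro ballI notI)
    fix X assume X: "X \<in> subsets_of_card S h" "X \<inter> K = {}"
    then have "card X \<le> card (S - K)"
      using assms unfolding subsets_of_card_def by (intro card_mono) auto
    then show False
      using X small unfolding subsets_of_card_def by auto
  qed
qed

text \<open>The arithmetic behind h = (2m - k + 1) div 2: at most h - 1 elements of an m-set are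
  missed by K iff K takes a strict majority of its k elements from it.\<close>

lemma majority_threshold:
  fixes m c k :: nat
  assumes "c \<le> m" "c \<le> k" "k \<le> m"
  shows "m - c < (2 * m - k + 1) div 2 \<longleftrightarrow> k < 2 * c"
proof -
  have "(2 * m - k + 1) div 2 = m - k div 2"
    using assms by (cases "even k") (auto elim!: evenE oddE)
  then show ?thesis
    using assms by auto
qed

text \<open>For h = h_of n k and a half S of an n-set, a k-set K is a strict majority on S
  iff K meets every h-subset of S. This turns majorities into a covering condition.\<close>

lemma majority_iff_hits_all:
  assumes "finite S" "finite K" "2 * card S = n" "card K = k" "2 * k \<le> n"
  shows "(\<forall>X\<in>subsets_of_card S (h_of n k). X \<inter> K \<noteq> {}) \<longleftrightarrow> k < 2 * card (K \<inter> S)"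
proof -
  have "card (S - K) = card S - card (K \<inter> S)"
    using card_Diff_subset_Int[of S K] assms(1) by (simp add: Int_commute)
  moreover have "card (K \<inter> S) \<le> card S" "card (K \<inter> S) \<le> k"
    using card_mono[OF assms(1) Int_lower2] card_mono[OF assms(2) Int_lower1] assms(4) by auto
  ultimately show ?thesis
    unfolding hits_all_iff[OF assms(1)] h_of_def
    using majority_threshold[of "card (K \<inter> S)" "card S" k] assms(3,5) by auto
qed

lemma majorities_iff_hits_all:
  assumes fin: "finite TT"
    and S: "\<forall>e\<in>{1..t}. S e \<subseteq> TT \<and> 2 * card (S e) = card TT"
    and k: "2 * k \<le> card TT" and K: "K \<subseteq> TT" "card K = k"
  shows "(\<forall>X\<in>(\<Union>e\<in>{1..t}. subsets_of_card (S e) (h_of (card TT) k)). X \<inter> K \<noteq> {})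
     \<longleftrightarrow> (\<forall>e\<in>{1..t}. k < 2 * card (K \<inter> S e))"
proof -
  have "finite K"
    using K(1) finite_subset[OF _ fin] by simp
  have per_edge: "(\<forall>X\<in>subsets_of_card (S e) (h_of (card TT) k). X \<inter> K \<noteq> {})
      \<longleftrightarrow> k < 2 * card (K \<inter> S e)" if "e \<in> {1..t}" for e
  proof -
    have "S e \<subseteq> TT" "2 * card (S e) = card TT"
      using S that by auto
    then have "finite (S e)"
      using finite_subset[OF _ fin] by simp
    then show ?thesis
      using majority_iff_hits_all[of "S e" K "card TT" k] k \<open>finite K\<close> K(2)
        \<open>2 * card (S e) = card TT\<close> by simp
  qed
  show ?thesis
    unfolding ball_UN using per_edge by (rule ball_cong[OF refl])
qed

definition avoid_count :: "'a set \<Rightarrow> nat \<Rightarrow> ('a set \<Rightarrow> bool) \<Rightarrow> 'a set \<Rightarrow> int" where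
  "avoid_count TT k \<Phi> U = int (card {K. K \<subseteq> TT - U \<and> card K = k \<and> \<Phi> K})"

lemma committee_count_sieve:
  assumes fin: "finite TT"
    and S: "\<forall>e\<in>{1..t}. S e \<subseteq> TT \<and> 2 * card (S e) = card TT"
    and k: "2 * k \<le> card TT"
  shows "int (committee_count t TT S k \<Phi>)
       = (\<Sum>F\<in>Pow (\<Union>e\<in>{1..t}. subsets_of_card (S e) (h_of (card TT) k)).
            (-1::int) ^ card F * avoid_count TT k \<Phi> (\<Union>F))"
proof -
  let ?A = "\<Union>e\<in>{1..t}. subsets_of_card (S e) (h_of (card TT) k)"
  let ?KS = "{K. K \<subseteq> TT \<and> card K = k \<and> \<Phi> K}"
  have "?A \<subseteq> Pow TT"
  proof
    fix X assume "X \<in> ?A"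
    then obtain e where "e \<in> {1..t}" "X \<subseteq> S e"
      unfolding subsets_of_card_def by blast
    then show "X \<in> Pow TT"
      using S by blast
  qed
  then have finA: "finite ?A"
    using fin by (meson finite_Pow_iff finite_subset)
  have finKS: "finite ?KS"
    by (rule finite_subset[of _ "Pow TT"]) (use fin in auto)
  have "{K\<in>?KS. \<forall>X\<in>?A. \<not> X \<inter> K = {}}
      = {K. K \<subseteq> TT \<and> card K = k \<and> (\<forall>e\<in>{1..t}. k < 2 * card (K \<inter> S e)) \<and> \<Phi> K}"
  proof (intro Collect_cong)
    fix K
    show "(K \<in> ?KS \<and> (\<forall>X\<in>?A. \<not> X \<inter> K = {}))
        \<longleftrightarrow> (K \<subseteq> TT \<and> card K = k \<and> (\<forall>e\<in>{1..t}. k < 2 * card (K \<inter> S e)) \<and> \<Phi> K)"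
      using majorities_iff_hits_all[OF fin S k, of K] by (cases "K \<in> ?KS") auto
  qed
  moreover have "{K\<in>?KS. \<forall>X\<in>F. X \<inter> K = {}} = {K. K \<subseteq> TT - \<Union>F \<and> card K = k \<and> \<Phi> K}" for F
    by auto
  ultimately show ?thesis
    using sieve_count[OF finA finKS, of "\<lambda>X K. X \<inter> K = {}"]
    unfolding committee_count_def avoid_count_def by simp
qed

definition inner_sieve :: "'a set set \<Rightarrow> ('a set \<Rightarrow> int) \<Rightarrow> 'a set \<Rightarrow> int" where
  "inner_sieve N Q V = (\<Sum>G1\<in>Pow N - {{}}. (-1::int) ^ card G1 * Q (\<Union>G1 \<union> V))"

definition sieve_difference :: "'a set set \<Rightarrow> 'a set set \<Rightarrow> 'a set set \<Rightarrow> ('a set \<Rightarrow> int) \<Rightarrow> int" where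
  "sieve_difference P Nm Np Q =
     (\<Sum>G2\<in>Pow P. (-1::int) ^ card G2 * (inner_sieve Nm Q (\<Union>G2) - inner_sieve Np Q (\<Union>G2)))"

lemma sieve_split:
  assumes "finite P" "finite N" "P \<inter> N = {}"
  shows "(\<Sum>F\<in>Pow (P \<union> N). (-1::int) ^ card F * Q (\<Union>F))
       = (\<Sum>G2\<in>Pow P. (-1::int) ^ card G2 * (Q (\<Union>G2) + inner_sieve N Q (\<Union>G2)))"
proof -
  have "(\<Sum>G1\<in>Pow N. (-1::int) ^ card (G1 \<union> G2) * Q (\<Union>(G1 \<union> G2)))
      = (-1::int) ^ card G2 * (Q (\<Union>G2) + inner_sieve N Q (\<Union>G2))" if "G2 \<in> Pow P" for G2
  proof -
    have "card (G1 \<union> G2) = card G1 + card G2" if "G1 \<in> Pow N" for G1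
      using that \<open>G2 \<in> Pow P\<close> assms by (auto intro!: card_Un_disjoint intro: finite_subset)
    then have "(\<Sum>G1\<in>Pow N. (-1::int) ^ card (G1 \<union> G2) * Q (\<Union>(G1 \<union> G2)))
        = (-1::int) ^ card G2 * (\<Sum>G1\<in>Pow N. (-1::int) ^ card G1 * Q (\<Union>G1 \<union> \<Union>G2))"
      by (simp add: sum_distrib_left power_add mult_ac)
    also have "(\<Sum>G1\<in>Pow N. (-1::int) ^ card G1 * Q (\<Union>G1 \<union> \<Union>G2)) = Q (\<Union>G2) + inner_sieve N Q (\<Union>G2)"
      unfolding inner_sieve_def using assms(2) by (subst sum.remove[of _ "{}"]) auto
    finally show ?thesis .
  qed
  then show ?thesis
    unfolding sum_Pow_disjoint_Un[OF assms] by (rule sum.cong[OF refl])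
qed

lemma committee_count_difference:
  assumes fin: "finite TT"
    and S: "\<forall>e\<in>{1..t}. S e \<subseteq> TT \<and> 2 * card (S e) = card TT"
    and S': "\<forall>e\<in>{1..t}. S' e \<subseteq> TT \<and> 2 * card (S' e) = card TT"
    and k: "2 * k \<le> card TT"
    and split: "(\<Union>e\<in>{1..t}. subsets_of_card (S e) (h_of (card TT) k)) = P \<union> Np"
    and split': "(\<Union>e\<in>{1..t}. subsets_of_card (S' e) (h_of (card TT) k)) = P \<union> Nm"
    and fP: "finite P" "finite Nm" "finite Np" and dj: "P \<inter> Nm = {}" "P \<inter> Np = {}"
  shows "int (committee_count t TT S' k \<Phi>) - int (committee_count t TT S k \<Phi>)
     = sieve_difference P Nm Np (avoid_count TT k \<Phi>)"
proof -
  let ?g = "avoid_count TT k \<Phi>"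
  have "int (committee_count t TT S' k \<Phi>) = (\<Sum>G2\<in>Pow P. (-1::int) ^ card G2 * (?g (\<Union>G2) + inner_sieve Nm ?g (\<Union>G2)))"
    using committee_count_sieve[OF fin S' k, of \<Phi>] sieve_split[OF fP(1,2) dj(1), of ?g] unfolding split' by simp
  moreover have "int (committee_count t TT S k \<Phi>) = (\<Sum>G2\<in>Pow P. (-1::int) ^ card G2 * (?g (\<Union>G2) + inner_sieve Np ?g (\<Union>G2)))"
    using committee_count_sieve[OF fin S k, of \<Phi>] sieve_split[OF fP(1,3) dj(2), of ?g] unfolding split by simp
  ultimately have "int (committee_count t TT S' k \<Phi>) - int (committee_count t TT S k \<Phi>)
      = (\<Sum>G2\<in>Pow P. (-1::int) ^ card G2 * (?g (\<Union>G2) + inner_sieve Nm ?g (\<Union>G2))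
                     - (-1::int) ^ card G2 * (?g (\<Union>G2) + inner_sieve Np ?g (\<Union>G2)))"
    by (simp add: sum_subtractf)
  also have "\<dots> = sieve_difference P Nm Np ?g"
    unfolding sieve_difference_def by (intro sum.cong refl) (simp add: algebra_simps)
  finally show ?thesis .
qed

lemma finite_subsets_of_card: "finite TT \<Longrightarrow> finite (subsets_of_card TT h)"
  unfolding subsets_of_card_def by (rule finite_subset[of _ "Pow TT"]) auto

lemma card_family_bound:
  assumes fin: "finite TT" and F: "F \<subseteq> subsets_of_card TT h" and c: "card (\<Union>F) \<le> m"
  shows "card F \<le> m choose h"
proof -
  have fU: "finite (\<Union>F)"
    using F fin unfolding subsets_of_card_def by (auto intro: finite_subset)
  have "F \<subseteq> {Y. Y \<subseteq> \<Union>F \<and> card Y = h}"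
    using F unfolding subsets_of_card_def by auto
  then have "card F \<le> card {Y. Y \<subseteq> \<Union>F \<and> card Y = h}"
    by (rule card_mono[rotated]) (use fU in \<open>auto intro: finite_subset[of _ "Pow (\<Union>F)"]\<close>)
  also have "\<dots> = card (\<Union>F) choose h"
    by (rule n_subsets[OF fU])
  also have "\<dots> \<le> m choose h"
    by (rule binomial_right_mono[OF c])
  finally show ?thesis .
qed

text \<open>Hence a term of the double sum with small union has few sets: this justifies the
  truncation in S1.\<close>

lemma nonvanishing_bound:
  assumes fin: "finite TT"
    and G: "G1 \<subseteq> subsets_of_card TT h" "G2 \<subseteq> subsets_of_card TT h" "G1 \<inter> G2 = {}"
    and c: "card (\<Union>G1 \<union> \<Union>G2) \<le> m"
  shows "card G1 + card G2 \<le> m choose h" "card (\<Union>G1) \<le> m" "card (\<Union>G2) \<le> m"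
proof -
  have "finite (subsets_of_card TT h)"
    using fin unfolding subsets_of_card_def by (auto intro: finite_subset[of _ "Pow TT"])
  then have "card (G1 \<union> G2) = card G1 + card G2"
    using G by (intro card_Un_disjoint) (auto intro: finite_subset)
  moreover have "card (G1 \<union> G2) \<le> m choose h"
    using G c by (intro card_family_bound[OF fin]) auto
  ultimately show "card G1 + card G2 \<le> m choose h"
    by simp
  have "\<Union>G1 \<union> \<Union>G2 \<subseteq> TT"
    using G unfolding subsets_of_card_def by blast
  then show "card (\<Union>G1) \<le> m" "card (\<Union>G2) \<le> m"
    using card_mono[OF finite_subset[OF _ fin] Un_upper1] card_mono[OF finite_subset[OF _ fin] Un_upper2] c
    by (meson le_trans)+
qed

lemma inner_sieve_large:
  assumes fin: "finite TT" and N: "N \<subseteq> Pow TT" and V: "V \<subseteq> TT" "m < card V"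
    and Qz: "\<And>U. U \<subseteq> TT \<Longrightarrow> m < card U \<Longrightarrow> Q U = 0"
  shows "inner_sieve N Q V = 0"
  unfolding inner_sieve_def
proof (rule sum.neutral, rule ballI)
  fix G1 assume "G1 \<in> Pow N - {{}}"
  then have "\<Union>G1 \<union> V \<subseteq> TT"
    using N V by blast
  moreover have "card V \<le> card (\<Union>G1 \<union> V)"
    using calculation by (intro card_mono) (auto intro: finite_subset[OF _ fin])
  ultimately show "(-1::int) ^ card G1 * Q (\<Union>G1 \<union> V) = 0"
    using Qz V(2) by simp
qed

lemma inner_sieve_truncated:
  assumes fin: "finite TT"
    and fam: "N \<subseteq> subsets_of_card TT h" "G2 \<subseteq> subsets_of_card TT h" "N \<inter> G2 = {}"
    and Qz: "\<And>U. U \<subseteq> TT \<Longrightarrow> m < card U \<Longrightarrow> Q U = 0"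
  shows "(\<Sum>G1 \<in> {G1. G1 \<subseteq> N \<and> 1 \<le> card G1 \<and> int (card G1) \<le> int (m choose h) - int (card G2)
                    \<and> card (\<Union>G1) \<le> m}. (-1::int) ^ card G1 * Q (\<Union>(G1 \<union> G2)))
       = inner_sieve N Q (\<Union>G2)"
  unfolding inner_sieve_def
proof (rule sum.mono_neutral_cong_left)
  have finN: "finite N"
    using fam(1) fin unfolding subsets_of_card_def by (auto intro: finite_subset[of _ "Pow TT"])
  then show "finite (Pow N - {{}})"
    by simp
  show "\<forall>G1\<in>Pow N - {{}} - {G1. G1 \<subseteq> N \<and> 1 \<le> card G1 \<and> int (card G1) \<le> int (m choose h) - int (card G2)
                    \<and> card (\<Union>G1) \<le> m}. (-1::int) ^ card G1 * Q (\<Union>G1 \<union> \<Union>G2) = 0"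
  proof
    fix G1 assume G1: "G1 \<in> Pow N - {{}} - {G1. G1 \<subseteq> N \<and> 1 \<le> card G1
        \<and> int (card G1) \<le> int (m choose h) - int (card G2) \<and> card (\<Union>G1) \<le> m}"
    have "1 \<le> card G1"
      using G1 finN by (auto intro: finite_subset simp: Suc_le_eq card_gt_0_iff)
    have G1sub: "G1 \<subseteq> subsets_of_card TT h" "G1 \<inter> G2 = {}"
      using G1 fam by auto
    have "\<not> card (\<Union>G1 \<union> \<Union>G2) \<le> m"
    proof
      assume "card (\<Union>G1 \<union> \<Union>G2) \<le> m"
      note bound = nonvanishing_bound[OF fin G1sub(1) fam(2) G1sub(2) this]
      then show False
        using G1 \<open>1 \<le> card G1\<close> by auto
    qed
    moreover have "\<Union>G1 \<union> \<Union>G2 \<subseteq> TT"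
      using G1 fam unfolding subsets_of_card_def by blast
    ultimately show "(-1::int) ^ card G1 * Q (\<Union>G1 \<union> \<Union>G2) = 0"
      using Qz by simp
  qed
qed auto

lemma inner_sieve_outside_range:
  assumes fin: "finite TT"
    and fam: "N \<subseteq> subsets_of_card TT h" "G2 \<subseteq> subsets_of_card TT h" "N \<inter> G2 = {}"
    and Qz: "\<And>U. U \<subseteq> TT \<Longrightarrow> m < card U \<Longrightarrow> Q U = 0"
    and out: "\<not> (int (card G2) \<le> int (m choose h) - 1 \<and> card (\<Union>G2) \<le> m)"
  shows "inner_sieve N Q (\<Union>G2) = 0"
  unfolding inner_sieve_def
proof (rule sum.neutral, rule ballI)
  fix G1 assume G1: "G1 \<in> Pow N - {{}}"
  have "finite N"
    using fam(1) fin unfolding subsets_of_card_def by (auto intro: finite_subset[of _ "Pow TT"])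
  then have "1 \<le> card G1"
    using G1 by (auto intro: finite_subset simp: Suc_le_eq card_gt_0_iff)
  have G1sub: "G1 \<subseteq> subsets_of_card TT h" "G1 \<inter> G2 = {}"
    using G1 fam by auto
  have "\<not> card (\<Union>G1 \<union> \<Union>G2) \<le> m"
  proof
    assume "card (\<Union>G1 \<union> \<Union>G2) \<le> m"
    note bound = nonvanishing_bound[OF fin G1sub(1) fam(2) G1sub(2) this]
    then show False
      using out \<open>1 \<le> card G1\<close> by auto
  qed
  moreover have "\<Union>G1 \<union> \<Union>G2 \<subseteq> TT"
    using G1 fam unfolding subsets_of_card_def by blast
  ultimately show "(-1::int) ^ card G1 * Q (\<Union>G1 \<union> \<Union>G2) = 0"
    using Qz by simp
qed

section \<open>The truncated sums S1 and S2\<close>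

lemma S1_eq_sieve_difference:
  assumes fin: "finite TT"
    and fam: "P_fam t TT a k \<subseteq> subsets_of_card TT (h_of (card TT) k)"
      "Nminus t TT a k \<subseteq> subsets_of_card TT (h_of (card TT) k)"
      "Nplus t TT a k \<subseteq> subsets_of_card TT (h_of (card TT) k)"
    and dj: "Nminus t TT a k \<inter> P_fam t TT a k = {}" "Nplus t TT a k \<inter> P_fam t TT a k = {}"
    and Qz: "\<And>U. U \<subseteq> TT \<Longrightarrow> card TT - k < card U \<Longrightarrow> Q U = 0"
  shows "S1 t TT a k (\<lambda>G1 G2. Q (\<Union>(G1 \<union> G2)))
       = sieve_difference (P_fam t TT a k) (Nminus t TT a k) (Nplus t TT a k) Q"
proof -
  define m where "m = card TT - k"
  define h where "h = h_of (card TT) k"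
  define P where "P = P_fam t TT a k"
  define Nm where "Nm = Nminus t TT a k"
  define Np where "Np = Nplus t TT a k"
  let ?range = "{G2. G2 \<subseteq> P \<and> int (card G2) \<le> int (m choose h) - 1 \<and> card (\<Union>G2) \<le> m}"
  let ?inner = "\<lambda>N G2. \<Sum>G1 \<in> {G1. G1 \<subseteq> N \<and> 1 \<le> card G1 \<and> int (card G1) \<le> int (m choose h) - int (card G2)
                    \<and> card (\<Union>G1) \<le> m}. (-1::int) ^ card G1 * Q (\<Union>(G1 \<union> G2))"
  note fam' = fam[folded h_def P_def Nm_def Np_def] and dj' = dj[folded P_def Nm_def Np_def]
  note Qz' = Qz[folded m_def]
  have subP: "G2 \<subseteq> subsets_of_card TT h" "N \<inter> G2 = {}" if "G2 \<subseteq> P" "N \<inter> P = {}" for G2 N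
    using that fam'(1) by auto
  have "S1 t TT a k (\<lambda>G1 G2. Q (\<Union>(G1 \<union> G2)))
      = (\<Sum>G2\<in>?range. (-1::int) ^ card G2 * (?inner Nm G2 - ?inner Np G2))"
    unfolding S1_def Let_def m_def h_def P_def Nm_def Np_def by simp
  also have "\<dots> = (\<Sum>G2\<in>?range. (-1::int) ^ card G2 * (inner_sieve Nm Q (\<Union>G2) - inner_sieve Np Q (\<Union>G2)))"
    using inner_sieve_truncated[where m = m and Q = Q, OF fin fam'(2) subP[OF _ dj'(1)] Qz']
      inner_sieve_truncated[where m = m and Q = Q, OF fin fam'(3) subP[OF _ dj'(2)] Qz']
    by (intro sum.cong) auto
  also have "\<dots> = sieve_difference P Nm Np Q"
    unfolding sieve_difference_def
  proof (rule sum.mono_neutral_left)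
    show "finite (Pow P)"
      using finite_subset[OF fam'(1) finite_subsets_of_card[OF fin]] by simp
    show "\<forall>G2\<in>Pow P - ?range. (-1::int) ^ card G2 * (inner_sieve Nm Q (\<Union>G2) - inner_sieve Np Q (\<Union>G2)) = 0"
      using inner_sieve_outside_range[where m = m and Q = Q, OF fin fam'(2) subP[OF _ dj'(1)] Qz']
        inner_sieve_outside_range[where m = m and Q = Q, OF fin fam'(3) subP[OF _ dj'(2)] Qz']
      by auto
  qed auto
  finally show ?thesis
    unfolding P_def Nm_def Np_def .
qed

lemma union_card_pos:
  assumes fin: "finite TT" and h: "1 \<le> h" and N: "N \<subseteq> subsets_of_card TT h"
    and F: "F \<subseteq> N" "F \<noteq> {}"
  shows "0 < card (\<Union>F)"
proof -
  obtain X where "X \<in> F"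
    using F(2) by blast
  then have "X \<subseteq> \<Union>F" "card X = h"
    using F(1) N unfolding subsets_of_card_def by auto
  moreover have "\<Union>F \<subseteq> TT"
    using F(1) N unfolding subsets_of_card_def by blast
  then have "finite (\<Union>F)"
    using fin by (rule finite_subset)
  ultimately have "h \<le> card (\<Union>F)"
    using card_mono by metis
  then show ?thesis
    using h by linarith
qed

lemma inner_lattice_sum:
  assumes fin: "finite TT" and h: "1 \<le> h" and N: "N \<subseteq> subsets_of_card TT h" and V: "V \<subseteq> TT"
    and Qz: "\<And>U. U \<subseteq> TT \<Longrightarrow> m < card U \<Longrightarrow> Q U = 0"
  shows "(\<Sum>G1 \<in> {G1\<in>lat_E N. 0 < card (lat_val G1) \<and> card (lat_val G1) \<le> m}.
            moebius (lat_E N) lat_le None G1 * Q (lat_val G1 \<union> V)) = inner_sieve N Q V"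
proof -
  have UN: "\<Union>N \<subseteq> TT"
    using N unfolding subsets_of_card_def by auto
  then have finU: "finite (\<Union>N)"
    using fin by (rule finite_subset)
  have "lat_of F \<in> {G1\<in>lat_E N. 0 < card (lat_val G1) \<and> card (lat_val G1) \<le> m}
      \<longleftrightarrow> F \<noteq> {} \<and> card (\<Union>F) \<le> m" if "F \<subseteq> N" for F
    using union_card_pos[OF fin h N that] lat_of_in_lat_E[OF that] by (auto simp: lat_of_def)
  then have "{F\<in>Pow N. lat_of F \<in> {G1\<in>lat_E N. 0 < card (lat_val G1) \<and> card (lat_val G1) \<le> m}}
      = {F\<in>Pow N - {{}}. card (\<Union>F) \<le> m}"
    by auto
  then have "(\<Sum>G1 \<in> {G1\<in>lat_E N. 0 < card (lat_val G1) \<and> card (lat_val G1) \<le> m}.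
            moebius (lat_E N) lat_le None G1 * Q (lat_val G1 \<union> V))
      = (\<Sum>F\<in>{F\<in>Pow N - {{}}. card (\<Union>F) \<le> m}. (-1::int) ^ card F * Q (\<Union>F \<union> V))"
    by (subst moebius_lat_E_sum[OF finU]) auto
  also have "\<dots> = inner_sieve N Q V"
    unfolding inner_sieve_def
  proof (rule sum.mono_neutral_left)
    show "finite (Pow N - {{}})"
      using finite_UnionD[OF finU] by simp
    show "\<forall>F\<in>Pow N - {{}} - {F\<in>Pow N - {{}}. card (\<Union>F) \<le> m}. (-1::int) ^ card F * Q (\<Union>F \<union> V) = 0"
    proof
      fix F assume F: "F \<in> Pow N - {{}} - {F\<in>Pow N - {{}}. card (\<Union>F) \<le> m}"
      then have "\<Union>F \<union> V \<subseteq> TT"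
        using UN V by blast
      moreover have "card (\<Union>F) \<le> card (\<Union>F \<union> V)"
        using calculation by (intro card_mono) (auto intro: finite_subset[OF _ fin])
      moreover have "m < card (\<Union>F)"
        using F by auto
      ultimately show "(-1::int) ^ card F * Q (\<Union>F \<union> V) = 0"
        using Qz[of "\<Union>F \<union> V"] by simp
    qed
  qed auto
  finally show ?thesis .
qed

lemma S2_eq_sieve_difference:
  assumes fin: "finite TT" and h: "1 \<le> h_of (card TT) k"
    and fam: "P_fam t TT a k \<subseteq> subsets_of_card TT (h_of (card TT) k)"
      "Nminus t TT a k \<subseteq> subsets_of_card TT (h_of (card TT) k)"
      "Nplus t TT a k \<subseteq> subsets_of_card TT (h_of (card TT) k)"
    and Qz: "\<And>U. U \<subseteq> TT \<Longrightarrow> card TT - k < card U \<Longrightarrow> Q U = 0"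
  shows "S2 t TT a k (\<lambda>G1 G2. Q (G1 \<union> G2))
       = sieve_difference (P_fam t TT a k) (Nminus t TT a k) (Nplus t TT a k) Q"
proof -
  define m where "m = card TT - k"
  define P where "P = P_fam t TT a k"
  define Nm where "Nm = Nminus t TT a k"
  define Np where "Np = Nplus t TT a k"
  note fam' = fam[folded P_def Nm_def Np_def] and Qz' = Qz[folded m_def]
  let ?inner = "\<lambda>N G2. \<Sum>G1 \<in> {G1\<in>lat_E N. 0 < card (lat_val G1) \<and> card (lat_val G1) \<le> m}.
                           moebius (lat_E N) lat_le None G1 * Q (lat_val G1 \<union> lat_val G2)"
  let ?g = "\<lambda>V. inner_sieve Nm Q V - inner_sieve Np Q V"
  have UP: "\<Union>P \<subseteq> TT"
    using fam'(1) unfolding subsets_of_card_def by auto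
  then have finU: "finite (\<Union>P)"
    using fin by (rule finite_subset)
  have "S2 t TT a k (\<lambda>G1 G2. Q (G1 \<union> G2))
      = (\<Sum>G2 \<in> {G2\<in>lat_E P. card (lat_val G2) \<le> m}. moebius (lat_E P) lat_le None G2 * (?inner Nm G2 - ?inner Np G2))"
    unfolding S2_def Let_def m_def P_def Nm_def Np_def by simp
  also have "\<dots> = (\<Sum>G2 \<in> {G2\<in>lat_E P. card (lat_val G2) \<le> m}. moebius (lat_E P) lat_le None G2 * ?g (lat_val G2))"
  proof -
    have "?inner N G2 = inner_sieve N Q (lat_val G2)"
      if "N \<subseteq> subsets_of_card TT (h_of (card TT) k)" "G2 \<in> lat_E P" for N G2
    proof -
      have "lat_val G2 \<subseteq> TT"
        using lat_val_subset[OF that(2)] UP by blast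
      then show ?thesis
        by (rule inner_lattice_sum[where m = m and Q = Q, OF fin h that(1) _ Qz'])
    qed
    then show ?thesis
      using fam'(2,3) by (intro sum.cong refl) simp
  qed
  also have "\<dots> = (\<Sum>F\<in>{F\<in>Pow P. card (\<Union>F) \<le> m}. (-1::int) ^ card F * ?g (\<Union>F))"
    by (rule moebius_sum_bounded_unions[OF finU])
  also have "\<dots> = sieve_difference P Nm Np Q"
    unfolding sieve_difference_def
  proof (rule sum.mono_neutral_left)
    show "finite (Pow P)"
      using finite_UnionD[OF finU] by simp
    have "?g (\<Union>F) = 0" if F: "F \<in> Pow P" "m < card (\<Union>F)" for F
    proof -
      have "\<Union>F \<subseteq> TT"
        using F(1) UP by blast
      moreover have "Nm \<subseteq> Pow TT" "Np \<subseteq> Pow TT"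
        using fam'(2,3) unfolding subsets_of_card_def by auto
      ultimately show ?thesis
        using inner_sieve_large[where Q = Q, OF fin _ _ F(2) Qz'] by simp
    qed
    then show "\<forall>F\<in>Pow P - {F\<in>Pow P. card (\<Union>F) \<le> m}. (-1::int) ^ card F * ?g (\<Union>F) = 0"
      by (simp add: not_le)
  qed auto
  finally show ?thesis
    unfolding P_def Nm_def Np_def .
qed

lemma avoid_count_vanishes:
  assumes "finite TT" "U \<subseteq> TT" "card TT - k < card U"
  shows "avoid_count TT k \<Phi> U = 0"
proof -
  have "card K \<noteq> k" if "K \<subseteq> TT - U" for K
  proof -
    have "card K \<le> card (TT - U)"
      using that assms(1) by (intro card_mono) auto
    also have "\<dots> = card TT - card U"
      using assms(1,2) by (simp add: card_Diff_subset finite_subset)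
    finally show ?thesis
      using assms(3) card_mono[OF assms(1,2)] by linarith
  qed
  then have "{K. K \<subseteq> TT - U \<and> card K = k \<and> \<Phi> K} = {}"
    by blast
  then show ?thesis
    unfolding avoid_count_def by (metis card.empty of_nat_0)
qed

text \<open>The first choice of Q counts all k-subsets avoiding U \<dots>\<close>

lemma Qkappa_eq_avoid_count:
  assumes "finite TT" "U \<subseteq> TT"
  shows "Qkappa TT k U = avoid_count TT k (\<lambda>_. True) U"
proof -
  have "card {K. K \<subseteq> TT - U \<and> card K = k} = card (TT - U) choose k"
    using n_subsets[of "TT - U" k] assms(1) by simp
  moreover have "card (TT - U) = card TT - card U"
    using assms by (simp add: card_Diff_subset finite_subset)
  ultimately show ?thesis
    unfolding Qkappa_def avoid_count_def by simp
qed

text \<open>\<dots> and the second counts the antipodal-free ones: outside U, the topes of W - U are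
  unpaired and those outside W = U \<union> -U come in opposite pairs.\<close>

lemma Qring_eq_avoid_count:
  assumes fin: "finite TT" and U: "U \<subseteq> TT" and inv: "free_involution_on TT sv_neg"
  shows "Qring TT k U = avoid_count TT k (antipodal_free sv_neg) U"
proof -
  define W where "W = U \<union> sv_neg ` U"
  have WT: "W \<subseteq> TT"
    unfolding W_def using U inv unfolding free_involution_on_def by auto
  have neg_mem: "y \<in> sv_neg ` U \<longleftrightarrow> sv_neg y \<in> U" for y
    by (metis image_iff sv_neg_inv)
  have "unpaired sv_neg (TT - U) = W - U" "paired sv_neg (TT - U) = TT - W"
    unfolding unpaired_def paired_def W_def using U inv neg_mem unfolding free_involution_on_def by auto
  moreover have "card (W - U) = card W - card U" "card (TT - W) = card TT - card W"
    using finite_subset[OF U fin] finite_subset[OF WT fin] WT by (simp_all add: card_Diff_subset W_def)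
  ultimately have "af_count sv_neg (TT - U) k = pair_choices (card W - card U) ((card TT - card W) div 2) k"
    using af_count_formula[OF inv fin, of "TT - U"] by auto
  then show ?thesis
    unfolding Qring_def Let_def W_def[symmetric] pair_choices_def avoid_count_def af_count_def by simp
qed

lemma sieve_difference_cong:
  assumes "P \<subseteq> Pow TT" "Nm \<subseteq> Pow TT" "Np \<subseteq> Pow TT"
    and "\<And>U. U \<subseteq> TT \<Longrightarrow> Q U = Q' U"
  shows "sieve_difference P Nm Np Q = sieve_difference P Nm Np Q'"
proof -
  have inner: "inner_sieve N Q V = inner_sieve N Q' V" if N: "N \<subseteq> Pow TT" and V: "V \<subseteq> TT" for N V
    unfolding inner_sieve_def
  proof (intro sum.cong refl)
    fix G1 assume "G1 \<in> Pow N - {{}}"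
    then have "\<Union>G1 \<union> V \<subseteq> TT"
      using N V by blast
    then show "(-1::int) ^ card G1 * Q (\<Union>G1 \<union> V) = (-1::int) ^ card G1 * Q' (\<Union>G1 \<union> V)"
      using assms(4) by simp
  qed
  show ?thesis
    unfolding sieve_difference_def
  proof (intro sum.cong refl)
    fix G2 assume "G2 \<in> Pow P"
    then have "\<Union>G2 \<subseteq> TT"
      using assms(1) by blast
    then show "(-1::int) ^ card G2 * (inner_sieve Nm Q (\<Union>G2) - inner_sieve Np Q (\<Union>G2))
        = (-1::int) ^ card G2 * (inner_sieve Nm Q' (\<Union>G2) - inner_sieve Np Q' (\<Union>G2))"
      using inner assms(2,3) by simp
  qed
qed

lemma families_of_h_subsets:
  shows "P_fam t TT a k \<subseteq> subsets_of_card TT (h_of (card TT) k)"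
    and "Nminus t TT a k \<subseteq> subsets_of_card TT (h_of (card TT) k)"
    and "Nplus t TT a k \<subseteq> subsets_of_card TT (h_of (card TT) k)"
    and "Nminus t TT a k \<inter> P_fam t TT a k = {}" "Nplus t TT a k \<inter> P_fam t TT a k = {}"
  unfolding P_fam_def Nminus_def Nplus_def subsets_of_card_def topes_pos_def topes_neg_def by auto

text \<open>Reorientation on a replaces the halves positive on a by those negative on a; all other
  halves are shared. Hence the difference of committee counts is a double alternating sum.\<close>

lemma reorientation_difference:
  assumes om: "oriented_matroid t L" and s: "simple_om t L" and a: "a \<in> {1..t}"
    and k: "2 * k \<le> card (topes L)"
  defines "TT \<equiv> topes L"
  shows "int (committee_count t TT (reoriented_pos TT a) k \<Phi>) - int (committee_count t TT (topes_pos TT) k \<Phi>)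
       = sieve_difference (P_fam t TT a k) (Nminus t TT a k) (Nplus t TT a k) (avoid_count TT k \<Phi>)"
proof (rule committee_count_difference)
  let ?h = "h_of (card TT) k"
  show fin: "finite TT"
    unfolding TT_def by (rule finite_topes[OF om])
  show "\<forall>e\<in>{1..t}. topes_pos TT e \<subseteq> TT \<and> 2 * card (topes_pos TT e) = card TT"
    using topes_halves(1)[OF om s] unfolding TT_def topes_pos_def by auto
  show "\<forall>e\<in>{1..t}. reoriented_pos TT a e \<subseteq> TT \<and> 2 * card (reoriented_pos TT a e) = card TT"
    using topes_halves[OF om s] a unfolding TT_def reoriented_pos_def topes_pos_def topes_neg_def by auto
  show "(\<Union>e\<in>{1..t}. subsets_of_card (topes_pos TT e) ?h) = P_fam t TT a k \<union> Nplus t TT a k"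
    using a unfolding P_fam_def Nplus_def by blast
  show "(\<Union>e\<in>{1..t}. subsets_of_card (reoriented_pos TT a e) ?h) = P_fam t TT a k \<union> Nminus t TT a k"
    using a unfolding P_fam_def Nminus_def reoriented_pos_def by (auto split: if_splits)
  show "finite (P_fam t TT a k)" "finite (Nminus t TT a k)" "finite (Nplus t TT a k)"
    using finite_subset[OF families_of_h_subsets(1) finite_subsets_of_card[OF fin]]
      finite_subset[OF families_of_h_subsets(2) finite_subsets_of_card[OF fin]]
      finite_subset[OF families_of_h_subsets(3) finite_subsets_of_card[OF fin]] by blast+
  show "P_fam t TT a k \<inter> Nminus t TT a k = {}" "P_fam t TT a k \<inter> Nplus t TT a k = {}"
    using families_of_h_subsets(4,5) by blast+
qed (use k TT_def in simp)

lemma kappa_differences_as_sieve: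
  assumes "1 \<le> t" "oriented_matroid t L" "simple_om t L" "a \<in> {1..t}" "1 \<le> k" "2 * k \<le> card (topes L)"
  defines "TT \<equiv> topes L"
  shows "int (kappa_star t k (reorient_topes a TT)) - int (kappa_star t k TT)
       = sieve_difference (P_fam t TT a k) (Nminus t TT a k) (Nplus t TT a k) (Qkappa TT k)"
    and "int (kappa_ring t k (reorient_topes a TT)) - int (kappa_ring t k TT)
       = sieve_difference (P_fam t TT a k) (Nminus t TT a k) (Nplus t TT a k) (Qring TT k)"
proof -
  have fin: "finite TT"
    unfolding TT_def by (rule finite_topes[OF assms(2)])
  have klt: "k < card TT"
    using assms(5,6) unfolding TT_def by linarith
  have inv: "free_involution_on TT sv_neg"
    unfolding TT_def by (rule topes_free_involution[OF assms(1-3)])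
  have sub: "P_fam t TT a k \<subseteq> Pow TT" "Nminus t TT a k \<subseteq> Pow TT" "Nplus t TT a k \<subseteq> Pow TT"
    using families_of_h_subsets(1-3)[of t TT a k] unfolding subsets_of_card_def by auto
  note diff = reorientation_difference[OF assms(2-4,6), folded TT_def]
  show "int (kappa_star t k (reorient_topes a TT)) - int (kappa_star t k TT)
      = sieve_difference (P_fam t TT a k) (Nminus t TT a k) (Nplus t TT a k) (Qkappa TT k)"
    using kappa_as_committee_count(1)[OF klt] kappa_reoriented_as_committee_count(1)[OF klt] diff
      sieve_difference_cong[OF sub Qkappa_eq_avoid_count[OF fin]] by simp
  show "int (kappa_ring t k (reorient_topes a TT)) - int (kappa_ring t k TT)
      = sieve_difference (P_fam t TT a k) (Nminus t TT a k) (Nplus t TT a k) (Qring TT k)"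
    using kappa_as_committee_count(2)[OF klt] kappa_reoriented_as_committee_count(2)[OF klt] diff
      sieve_difference_cong[OF sub Qring_eq_avoid_count[OF fin _ inv]] by simp
qed

theorem mainTheorem7:
  fixes t a k :: nat and L :: "sv set"
  assumes "1 \<le> t"
    and "oriented_matroid t L"
    and "simple_om t L"
    and "a \<in> {1..t}"
    and "1 \<le> k" and "2 * k \<le> card (topes L)"
  shows "S1 t (topes L) a k (\<lambda>G1 G2. Qkappa (topes L) k (\<Union>(G1 \<union> G2)))
           = int (kappa_star t k (reorient_topes a (topes L))) - int (kappa_star t k (topes L))
       \<and> S2 t (topes L) a k (\<lambda>G1 G2. Qkappa (topes L) k (G1 \<union> G2))
           = int (kappa_star t k (reorient_topes a (topes L))) - int (kappa_star t k (topes L))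
       \<and> S1 t (topes L) a k (\<lambda>G1 G2. Qring (topes L) k (\<Union>(G1 \<union> G2)))
           = int (kappa_ring t k (reorient_topes a (topes L))) - int (kappa_ring t k (topes L))
       \<and> S2 t (topes L) a k (\<lambda>G1 G2. Qring (topes L) k (G1 \<union> G2))
           = int (kappa_ring t k (reorient_topes a (topes L))) - int (kappa_ring t k (topes L))"
proof -
  define TT where "TT = topes L"
  have fin: "finite TT"
    unfolding TT_def by (rule finite_topes[OF assms(2)])
  have inv: "free_involution_on TT sv_neg"
    unfolding TT_def by (rule topes_free_involution[OF assms(1-3)])
  have h: "1 \<le> h_of (card TT) k"
    using assms(5,6) unfolding h_of_def TT_def by simp
  have Qkappa_vanishes: "Qkappa TT k U = 0" if "U \<subseteq> TT" "card TT - k < card U" for U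
    using Qkappa_eq_avoid_count[OF fin that(1)] avoid_count_vanishes[OF fin that] by simp
  have Qring_vanishes: "Qring TT k U = 0" if "U \<subseteq> TT" "card TT - k < card U" for U
    using Qring_eq_avoid_count[OF fin that(1) inv] avoid_count_vanishes[OF fin that] by simp
  note fam = families_of_h_subsets[of t TT a k]
  show ?thesis
    unfolding TT_def[symmetric] kappa_differences_as_sieve[OF assms, folded TT_def]
    using S1_eq_sieve_difference[where Q = "Qkappa TT k", OF fin fam Qkappa_vanishes]
      S1_eq_sieve_difference[where Q = "Qring TT k", OF fin fam Qring_vanishes]
      S2_eq_sieve_difference[where Q = "Qkappa TT k", OF fin h fam(1-3) Qkappa_vanishes]
      S2_eq_sieve_difference[where Q = "Qring TT k", OF fin h fam(1-3) Qring_vanishes]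
    by simp
qed

end
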